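(* Let $(\Sigma,\Lambda,\rho,\tau)$ be a discrete real Riemann surface of genus $g$, and let $(a_1,\dots,a_g,b_1,\dots,b_g)$ be a symplectic basis of $H_1(\Sigma,\mathbb Z)$, represented by closed paths $\alpha_i,\beta_i$ on the medial graph $X$, such that $\tau(a_i)=a_i$ and $\tau(b_i)=\sum_{j}h_{ji}a_j-b_i$ for a symmetric matrix $H=(h_{ij})$ with entries in $\{0,1\}$. Let $\Pi^{B,B},\Pi^{W,B},\Pi^{B,W},\Pi^{W,W}$ be the blocks of the complete discrete period matrix with respect to this basis. (i) If $\tau$ is of Type 1 (color-preserving), then $2\Re(\Pi^{B,B})=H=2\Re(\Pi^{W,W})$ and $\Re(\Pi^{W,B})=0=\Re(\Pi^{B,W})$. (ii) If $\tau$ is of Type 2 (color-reversing), then $\Pi^{B,B}+\overline{\Pi^{W,W}}=H$ and $\Pi^{W,B}+\overline{\Pi^{B,W}}=0$.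
   Context: A discrete Riemann surface $(\Sigma,\Lambda,\rho)$ consists of a compact connected oriented surface $\Sigma$ of genus $g$, a finite strongly regular cellular decomposition $\Lambda$ of $\Sigma$ into quadrilaterals (two distinct faces are disjoint, share exactly one vertex, or share exactly one edge) whose 1-skeleton is bipartite with a fixed black/white vertex coloring, and $\rho:F(\Lambda)\to\{z\in\mathbb C:\Re z>0\}$. For a face $Q$ its vertices in counterclockwise order are $b_-,w_-,b_+,w_+$ ($b_\pm$ black, $w_\pm$ white). A discrete antiholomorphic involution is a bijection $\tau:V(\Lambda)\to V(\Lambda)$ with $\tau\circ\tau=\mathrm{id}$, a graph automorphism mapping faces to faces and reversing orientation (counterclockwise boundary order of $Q$ maps to clockwise boundary order of $\tau(Q)$), and either Type 1: $\tau$ preserves colors and $\rho_{\tau(Q)}=\overline{\rho_Q}$ for all $Q$, or Type 2: $\tau$ swaps colors and $\rho_{\tau(Q)}=1/\overline{\rho_Q}$ for all $Q$. Then $(\Sigma,\Lambda,\rho,\tau)$ is a discrete real Riemann surface. $\tau$ acts on $H_1(\Sigma,\mathbb Z)$; a symplectic basis satisfies $\mathrm{int}(a_i,a_j)=0=\mathrm{int}(b_i,b_j)$, $\mathrm{int}(a_i,b_j)=\delta_{ij}$. Medial graph $X$: vertices are midpoints of edges of $\Lambda$; two are adjacent iff the corresponding edges share a vertex and lie in a common face. Each face $Q$ contains four edges of $X$ forming a 4-cycle $F_Q$. The edge of $X$ joining the midpoints of edges $uv$ and $vw$ of $Q$ is black if $u,w$ are black and white if $u,w$ are white. $X$ is the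 1-skeleton of a cell decomposition of $\Sigma$ with faces $F_Q$ ($Q\in F(\Lambda)$) and $F_v$ ($v\in V(\Lambda)$, the cycle of $X$ around $v$). $\tau$ induces an automorphism of $X$. A discrete one-form is a function $\omega$ on oriented edges of $X$ with $\omega(-e)=-\omega(e)$; $\int_P\omega=\sum_{e\in P}\omega(e)$. It is of type $\Diamond$ if for every $Q$ it takes equal values on the two black edges of $F_Q$ both oriented from the $b_-$ side toward the $b_+$ side (midpoint of $b_-w_-$ to midpoint of $w_-b_+$, and midpoint of $b_-w_+$ to midpoint of $w_+b_+$), and equal values on the two white edges similarly oriented from $w_-$ toward $w_+$. It is closed if its sum around the boundary of every face $F_Q$, $F_v$ vanishes. For $f$ on the vertices of $Q$, $df(e)=(f(w)-f(u))/2$ for the edge $e$ from the midpoint of $uv$ to the midpoint of $vw$. $f$ is discrete holomorphic on $Q$ if $f(w_+)-f(w_-)=i\rho_Q(f(b_+)-f(b_-))$. A discrete holomorphic differential is a closed one-form of type $\Diamond$ such that for every $Q$ there is $f$ discrete holomorphic on $Q$ with $\omega=df$ on the edges of $F_Q$. For a closed path $P$ on $X$ let $BP$ (resp. $WP$) be its set of oriented black (resp. white) edges; for closed $\omega$ of type $\Diamond$, $2\int_{BP}\omega$ (black period) and $2\int_{WP}\omega$ (white period) depend only on the homology class of $P$. Known fact: for any $2g$ complex numbers there is a unique discrete holomorphic differential with these prescribed black and white $a$-periods $2\int_{B\alpha_k}\omega$, $2\int_{W\alpha_k}\omega$. Let $\omega^B_k$ be the one with black $a_j$-periods $\delta_{jk}$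 and zero white $a$-periods, and $\omega^W_k$ the one with white $a_j$-periods $\delta_{jk}$ and zero black $a$-periods. Then $\Pi^{B,B}_{jk}=2\int_{B\beta_j}\omega^B_k$, $\Pi^{W,B}_{jk}=2\int_{W\beta_j}\omega^B_k$, $\Pi^{B,W}_{jk}=2\int_{B\beta_j}\omega^W_k$, $\Pi^{W,W}_{jk}=2\int_{W\beta_j}\omega^W_k$; the complete discrete period matrix is $\tilde\Pi=\begin{pmatrix}\Pi^{B,W}&\Pi^{B,B}\\ \Pi^{W,W}&\Pi^{W,B}\end{pmatrix}$. *)

theory Defs
  imports Complex_Main
begin

section \<open>Combinatorial discrete Riemann surfaces (quad-graphs)\<close>

text \<open>A face is stored as its four vertices (b_-, w_-, b_+, w_+) in counterclockwise order.\<close>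
type_synonym 'v quad = "'v \<times> 'v \<times> 'v \<times> 'v"

definition bm :: "'v quad \<Rightarrow> 'v" where "bm q = fst q"
definition wm :: "'v quad \<Rightarrow> 'v" where "wm q = fst (snd q)"
definition bp :: "'v quad \<Rightarrow> 'v" where "bp q = fst (snd (snd q))"
definition wp :: "'v quad \<Rightarrow> 'v" where "wp q = snd (snd (snd q))"

definition cyc :: "'v quad \<Rightarrow> 'v list" where
  "cyc q = [bm q, wm q, bp q, wp q]"

definition qverts :: "'v quad \<Rightarrow> 'v set" where
  "qverts q = set (cyc q)"

definition triples :: "'v quad \<Rightarrow> ('v \<times> 'v \<times> 'v) set" where
  "triples q = {(bm q, wm q, bp q), (wm q, bp q, wp q), (bp q, wp q, bm q), (wp q, bm q, wm q)}"

definition dedges :: "'v quad \<Rightarrow> ('v \<times> 'v) set" where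
  "dedges q = {(bm q, wm q), (wm q, bp q), (bp q, wp q), (wp q, bm q)}"

definition quad_edges :: "'v quad \<Rightarrow> 'v set set" where
  "quad_edges q = {{bm q, wm q}, {wm q, bp q}, {bp q, wp q}, {wp q, bm q}}"

record ('v, 'f) drs =
  verts :: "'v set"
  blk :: "'v \<Rightarrow> bool"
  faces :: "'f set"
  quad :: "'f \<Rightarrow> 'v quad"
  rho :: "'f \<Rightarrow> complex"

definition lam_edges :: "('v, 'f) drs \<Rightarrow> 'v set set" where
  "lam_edges S = (\<Union>Q\<in>faces S. quad_edges (quad S Q))"

definition nbrs :: "('v, 'f) drs \<Rightarrow> 'v \<Rightarrow> 'v set" where
  "nbrs S v = {u. {u, v} \<in> lam_edges S}"

definition link_rel :: "('v, 'f) drs \<Rightarrow> 'v \<Rightarrow> ('v \<times> 'v) set" where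
  "link_rel S v = {(p, s). \<exists>Q\<in>faces S. (p, v, s) \<in> triples (quad S Q)}"

definition adj_rel :: "('v, 'f) drs \<Rightarrow> ('v \<times> 'v) set" where
  "adj_rel S = {(u, v). \<exists>Q\<in>faces S. (u, v) \<in> dedges (quad S Q)}"

text \<open>(S, g) is a discrete Riemann surface of genus g: the quadrilaterals glue to a compact
  connected oriented closed surface (each directed edge lies in exactly one face, each undirected
  edge in exactly two faces with opposite orientations, vertex links are single cycles),
  the decomposition is strongly regular, the 1-skeleton is bipartite with the given colouring,
  the Euler characteristic is 2 - 2g, and rho has positive real part.\<close>
definition discrete_riemann_surface :: "('v, 'f) drs \<Rightarrow> nat \<Rightarrow> bool" where
  "discrete_riemann_surface S g \<longleftrightarrow>
     finite (verts S) \<and> finite (faces S) \<and> faces S \<noteq> {} \<and>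
     verts S = (\<Union>Q\<in>faces S. qverts (quad S Q)) \<and>
     (\<forall>Q\<in>faces S. distinct (cyc (quad S Q)) \<and>
        blk S (bm (quad S Q)) \<and> blk S (bp (quad S Q)) \<and>
        \<not> blk S (wm (quad S Q)) \<and> \<not> blk S (wp (quad S Q))) \<and>
     (\<forall>u v. (u, v) \<in> adj_rel S \<longrightarrow>
        card {Q\<in>faces S. (u, v) \<in> dedges (quad S Q)} = 1 \<and>
        card {Q\<in>faces S. (v, u) \<in> dedges (quad S Q)} = 1) \<and>
     (\<forall>v\<in>verts S. \<forall>u\<in>nbrs S v. \<forall>w\<in>nbrs S v. (u, w) \<in> (link_rel S v)\<^sup>*) \<and>
     (\<forall>u\<in>verts S. \<forall>w\<in>verts S. (u, w) \<in> (adj_rel S)\<^sup>*) \<and>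
     (\<forall>Q\<in>faces S. \<forall>Q'\<in>faces S. Q \<noteq> Q' \<longrightarrow>
        (let I = qverts (quad S Q) \<inter> qverts (quad S Q') in
          I = {} \<or> card I = 1 \<or>
          (I \<in> quad_edges (quad S Q) \<and> I \<in> quad_edges (quad S Q')))) \<and>
     int (card (verts S)) - int (card (lam_edges S)) + int (card (faces S)) = 2 - 2 * int g \<and>
     (\<forall>Q\<in>faces S. Re (rho S Q) > 0)"

section \<open>Discrete antiholomorphic involutions\<close>

definition antihol_base :: "('v, 'f) drs \<Rightarrow> ('v \<Rightarrow> 'v) \<Rightarrow> bool" where
  "antihol_base S \<tau> \<longleftrightarrow>
     (\<forall>v\<in>verts S. \<tau> v \<in> verts S \<and> \<tau> (\<tau> v) = v) \<and>
     (\<forall>Q\<in>faces S. \<exists>Q'\<in>faces S. \<exists>n.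
        rotate n (cyc (quad S Q')) = rev (map \<tau> (cyc (quad S Q))))"

definition is_type1 :: "('v, 'f) drs \<Rightarrow> ('v \<Rightarrow> 'v) \<Rightarrow> bool" where
  "is_type1 S \<tau> \<longleftrightarrow>
     (\<forall>v\<in>verts S. blk S (\<tau> v) = blk S v) \<and>
     (\<forall>Q\<in>faces S. \<forall>Q'\<in>faces S. qverts (quad S Q') = \<tau> ` qverts (quad S Q) \<longrightarrow>
        rho S Q' = cnj (rho S Q))"

definition is_type2 :: "('v, 'f) drs \<Rightarrow> ('v \<Rightarrow> 'v) \<Rightarrow> bool" where
  "is_type2 S \<tau> \<longleftrightarrow>
     (\<forall>v\<in>verts S. blk S (\<tau> v) \<noteq> blk S v) \<and>
     (\<forall>Q\<in>faces S. \<forall>Q'\<in>faces S. qverts (quad S Q') = \<tau> ` qverts (quad S Q) \<longrightarrow>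
        rho S Q' = 1 / cnj (rho S Q))"

definition discrete_antihol_involution :: "('v, 'f) drs \<Rightarrow> ('v \<Rightarrow> 'v) \<Rightarrow> bool" where
  "discrete_antihol_involution S \<tau> \<longleftrightarrow> antihol_base S \<tau> \<and> (is_type1 S \<tau> \<or> is_type2 S \<tau>)"

section \<open>Medial graph X\<close>

text \<open>Vertices of X are the edges {u,v} of Lambda (standing for their midpoints);
  oriented edges of X are pairs (e1, e2).\<close>
definition Xedges :: "('v, 'f) drs \<Rightarrow> ('v set \<times> 'v set) set" where
  "Xedges S = {({u, v}, {v, w}) | u v w. \<exists>Q\<in>faces S.
      (u, v, w) \<in> triples (quad S Q) \<or> (w, v, u) \<in> triples (quad S Q)}"

definition black_Xe :: "('v, 'f) drs \<Rightarrow> 'v set \<times> 'v set \<Rightarrow> bool" where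
  "black_Xe S e \<longleftrightarrow> (\<forall>x \<in> (fst e - snd e) \<union> (snd e - fst e). blk S x)"

definition white_Xe :: "('v, 'f) drs \<Rightarrow> 'v set \<times> 'v set \<Rightarrow> bool" where
  "white_Xe S e \<longleftrightarrow> (\<forall>x \<in> (fst e - snd e) \<union> (snd e - fst e). \<not> blk S x)"

definition FQ_edges :: "'v quad \<Rightarrow> ('v set \<times> 'v set) set" where
  "FQ_edges q = {({u, v}, {v, w}) | u v w. (u, v, w) \<in> triples q}"

definition Fv_edges :: "('v, 'f) drs \<Rightarrow> 'v \<Rightarrow> ('v set \<times> 'v set) set" where
  "Fv_edges S v = {({p, v}, {v, s}) | p s. \<exists>Q\<in>faces S. (p, v, s) \<in> triples (quad S Q)}"

definition cycle_chain :: "('v set \<times> 'v set) set \<Rightarrow> 'v set \<times> 'v set \<Rightarrow> int" where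
  "cycle_chain C e = (if e \<in> C then 1 else if (snd e, fst e) \<in> C then -1 else 0)"

definition pedges :: "'a list \<Rightarrow> ('a \<times> 'a) list" where
  "pedges xs = zip xs (tl xs)"

definition closed_Xpath :: "('v, 'f) drs \<Rightarrow> 'v set list \<Rightarrow> bool" where
  "closed_Xpath S xs \<longleftrightarrow> length xs \<ge> 2 \<and> hd xs = last xs \<and> set (pedges xs) \<subseteq> Xedges S"

definition pchain :: "'v set list \<Rightarrow> 'v set \<times> 'v set \<Rightarrow> int" where
  "pchain xs e = int (count_list (pedges xs) e) - int (count_list (pedges xs) (snd e, fst e))"

text \<open>Homology in H_1(Sigma, Z), computed cellularly on the cell decomposition with
  1-skeleton X and faces F_Q, F_v.\<close>
definition homologous :: "('v, 'f) drs \<Rightarrow> ('v set \<times> 'v set \<Rightarrow> int) \<Rightarrow> ('v set \<times> 'v set \<Rightarrow> int) \<Rightarrow> bool" where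
  "homologous S c c' \<longleftrightarrow> (\<exists>cf cv. \<forall>e. c e - c' e =
      (\<Sum>Q\<in>faces S. cf Q * cycle_chain (FQ_edges (quad S Q)) e) +
      (\<Sum>v\<in>verts S. cv v * cycle_chain (Fv_edges S v) e))"

definition tau_path :: "('v \<Rightarrow> 'v) \<Rightarrow> 'v set list \<Rightarrow> 'v set list" where
  "tau_path \<tau> xs = map (\<lambda>e. \<tau> ` e) xs"

text \<open>The black edges of a path, read as diagonals b_- to b_+, give a
  homologous cycle on the black graph Gamma, the white ones (w_- to w_+) a homologous cycle on the
  dual white graph; the intersection number is the signed count of crossings of these
  diagonals (the crossing b_-b_+ with w_-w_+ inside a face counts +1).\<close>
definition Bcount :: "'v set list \<Rightarrow> 'v quad \<Rightarrow> int" where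
  "Bcount xs q = pchain xs ({bm q, wm q}, {wm q, bp q}) + pchain xs ({bm q, wp q}, {wp q, bp q})"

definition Wcount :: "'v set list \<Rightarrow> 'v quad \<Rightarrow> int" where
  "Wcount xs q = pchain xs ({wm q, bm q}, {bm q, wp q}) + pchain xs ({wm q, bp q}, {bp q, wp q})"

definition intersection :: "('v, 'f) drs \<Rightarrow> 'v set list \<Rightarrow> 'v set list \<Rightarrow> int" where
  "intersection S xs ys = (\<Sum>Q\<in>faces S. Bcount xs (quad S Q) * Wcount ys (quad S Q))"

definition symplectic_basis :: "('v, 'f) drs \<Rightarrow> nat \<Rightarrow> (nat \<Rightarrow> 'v set list) \<Rightarrow> (nat \<Rightarrow> 'v set list) \<Rightarrow> bool" where
  "symplectic_basis S g \<alpha> \<beta> \<longleftrightarrow>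
     (\<forall>i<g. closed_Xpath S (\<alpha> i) \<and> closed_Xpath S (\<beta> i)) \<and>
     (\<forall>i<g. \<forall>j<g. intersection S (\<alpha> i) (\<alpha> j) = 0 \<and> intersection S (\<beta> i) (\<beta> j) = 0 \<and>
        intersection S (\<alpha> i) (\<beta> j) = (if i = j then 1 else 0)) \<and>
     (\<forall>xs. closed_Xpath S xs \<longrightarrow> (\<exists>m n. homologous S (pchain xs)
        (\<lambda>e. \<Sum>i<g. m i * pchain (\<alpha> i) e + n i * pchain (\<beta> i) e)))"

section \<open>Discrete one-forms and holomorphic differentials\<close>

definition one_form :: "('v, 'f) drs \<Rightarrow> ('v set \<times> 'v set \<Rightarrow> complex) \<Rightarrow> bool" where
  "one_form S \<omega> \<longleftrightarrow> (\<forall>e. e \<notin> Xedges S \<longrightarrow> \<omega> e = 0) \<and>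
     (\<forall>e\<in>Xedges S. \<omega> (snd e, fst e) = - \<omega> e)"

definition type_diamond :: "('v, 'f) drs \<Rightarrow> ('v set \<times> 'v set \<Rightarrow> complex) \<Rightarrow> bool" where
  "type_diamond S \<omega> \<longleftrightarrow> (\<forall>Q\<in>faces S. let q = quad S Q in
     \<omega> ({bm q, wm q}, {wm q, bp q}) = \<omega> ({bm q, wp q}, {wp q, bp q}) \<and>
     \<omega> ({wm q, bm q}, {bm q, wp q}) = \<omega> ({wm q, bp q}, {bp q, wp q}))"

definition closed_form :: "('v, 'f) drs \<Rightarrow> ('v set \<times> 'v set \<Rightarrow> complex) \<Rightarrow> bool" where
  "closed_form S \<omega> \<longleftrightarrow>
     (\<forall>Q\<in>faces S. (\<Sum>e\<in>FQ_edges (quad S Q). \<omega> e) = 0) \<and>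
     (\<forall>v\<in>verts S. (\<Sum>e\<in>Fv_edges S v. \<omega> e) = 0)"

definition disc_holomorphic_on :: "complex \<Rightarrow> 'v quad \<Rightarrow> ('v \<Rightarrow> complex) \<Rightarrow> bool" where
  "disc_holomorphic_on r q f \<longleftrightarrow> f (wp q) - f (wm q) = \<i> * r * (f (bp q) - f (bm q))"

definition holo_diff :: "('v, 'f) drs \<Rightarrow> ('v set \<times> 'v set \<Rightarrow> complex) \<Rightarrow> bool" where
  "holo_diff S \<omega> \<longleftrightarrow> one_form S \<omega> \<and> type_diamond S \<omega> \<and> closed_form S \<omega> \<and>
     (\<forall>Q\<in>faces S. \<exists>f. disc_holomorphic_on (rho S Q) (quad S Q) f \<and>
        (\<forall>(u, v, w)\<in>triples (quad S Q). \<omega> ({u, v}, {v, w}) = (f w - f u) / 2))"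

definition bper :: "('v, 'f) drs \<Rightarrow> ('v set \<times> 'v set \<Rightarrow> complex) \<Rightarrow> 'v set list \<Rightarrow> complex" where
  "bper S \<omega> xs = 2 * sum_list (map \<omega> (filter (black_Xe S) (pedges xs)))"

definition wper :: "('v, 'f) drs \<Rightarrow> ('v set \<times> 'v set \<Rightarrow> complex) \<Rightarrow> 'v set list \<Rightarrow> complex" where
  "wper S \<omega> xs = 2 * sum_list (map \<omega> (filter (white_Xe S) (pedges xs)))"

definition omegaB :: "('v, 'f) drs \<Rightarrow> nat \<Rightarrow> (nat \<Rightarrow> 'v set list) \<Rightarrow> nat \<Rightarrow> ('v set \<times> 'v set \<Rightarrow> complex)" where
  "omegaB S g \<alpha> k = (THE \<omega>. holo_diff S \<omega> \<and>
     (\<forall>j<g. bper S \<omega> (\<alpha> j) = (if j = k then 1 else 0) \<and> wper S \<omega> (\<alpha> j) = 0))"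

definition omegaW :: "('v, 'f) drs \<Rightarrow> nat \<Rightarrow> (nat \<Rightarrow> 'v set list) \<Rightarrow> nat \<Rightarrow> ('v set \<times> 'v set \<Rightarrow> complex)" where
  "omegaW S g \<alpha> k = (THE \<omega>. holo_diff S \<omega> \<and>
     (\<forall>j<g. wper S \<omega> (\<alpha> j) = (if j = k then 1 else 0) \<and> bper S \<omega> (\<alpha> j) = 0))"

definition PiBB :: "('v, 'f) drs \<Rightarrow> nat \<Rightarrow> (nat \<Rightarrow> 'v set list) \<Rightarrow> (nat \<Rightarrow> 'v set list) \<Rightarrow> nat \<Rightarrow> nat \<Rightarrow> complex" where
  "PiBB S g \<alpha> \<beta> j k = bper S (omegaB S g \<alpha> k) (\<beta> j)"
definition PiWB :: "('v, 'f) drs \<Rightarrow> nat \<Rightarrow> (nat \<Rightarrow> 'v set list) \<Rightarrow> (nat \<Rightarrow> 'v set list) \<Rightarrow> nat \<Rightarrow> nat \<Rightarrow> complex" where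
  "PiWB S g \<alpha> \<beta> j k = wper S (omegaB S g \<alpha> k) (\<beta> j)"
definition PiBW :: "('v, 'f) drs \<Rightarrow> nat \<Rightarrow> (nat \<Rightarrow> 'v set list) \<Rightarrow> (nat \<Rightarrow> 'v set list) \<Rightarrow> nat \<Rightarrow> nat \<Rightarrow> complex" where
  "PiBW S g \<alpha> \<beta> j k = bper S (omegaW S g \<alpha> k) (\<beta> j)"
definition PiWW :: "('v, 'f) drs \<Rightarrow> nat \<Rightarrow> (nat \<Rightarrow> 'v set list) \<Rightarrow> (nat \<Rightarrow> 'v set list) \<Rightarrow> nat \<Rightarrow> nat \<Rightarrow> complex" where
  "PiWW S g \<alpha> \<beta> j k = wper S (omegaW S g \<alpha> k) (\<beta> j)"

end

theory Submission
  imports Defs "Jordan_Normal_Form.Determinant"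
begin

text \<open>A discrete holomorphic differential is determined by one number \<open>\<theta>\<^sub>Q\<close> per face, its
  value on the black edges of \<open>F\<^sub>Q\<close>; on the white edges it is then \<open>\<i> \<rho>\<^sub>Q \<theta>\<^sub>Q\<close>. Closedness
  around the vertices and the black and white \<open>a\<close>-periods are linear conditions on \<open>\<theta>\<close>. If
  all \<open>a\<close>-periods vanish, the conjugate of the white part, corrected by the forms dual to the
  \<open>a\<close>-cycles, is exact, and pairing it with \<open>\<theta>\<close> gives \<open>\<Sum> Re \<rho>\<^sub>Q |\<theta>\<^sub>Q|\<^sup>2 = 0\<close>, so \<open>\<theta> = 0\<close>.
  Since \<open>E = 2 F\<close>, Euler's formula makes the linear system square, so differentials with
  arbitrary prescribed \<open>a\<close>-periods exist and are unique.

  The involution maps a holomorphic differential \<open>\<omega>\<close> to the holomorphic differential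
  \<open>cnj (\<tau>\<^sup>* \<omega>)\<close>, whose periods over a cycle are the conjugate periods of \<open>\<omega>\<close> over its
  \<open>\<tau>\<close>-image, with black and white exchanged in Type 2. As \<open>\<tau>\<close> fixes the \<open>a\<close>-cycles and maps
  \<open>b\<^sub>i\<close> to \<open>\<Sum>\<^sub>j h\<^sub>j\<^sub>i a\<^sub>j - b\<^sub>i\<close>, uniqueness identifies the image of \<open>\<omega>\<^sup>B\<^sub>k\<close> with \<open>\<omega>\<^sup>B\<^sub>k\<close>
  in Type 1 and with \<open>\<omega>\<^sup>W\<^sub>k\<close> in Type 2, and comparing \<open>b\<close>-periods gives the relations.\<close>

section \<open>Square linear systems\<close>

lemma square_system_solvable:
  fixes K :: "nat \<Rightarrow> 'f \<Rightarrow> 'a :: field"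
  assumes enum: "bij_betw enum {..<n} F"
    and inj: "\<And>x. \<forall>r<n. (\<Sum>Q\<in>F. K r Q * x Q) = 0 \<Longrightarrow> \<forall>Q\<in>F. x Q = 0"
  shows "\<exists>x. \<forall>r<n. (\<Sum>Q\<in>F. K r Q * x Q) = t r"
proof -
  define A where "A = mat n n (\<lambda>(r, c). K r (enum c))"
  have A: "A \<in> carrier_mat n n" by (simp add: A_def)
  define idx where "idx = the_inv_into {..<n} enum"
  have idx: "idx (enum c) = c" if "c < n" for c
    using enum that unfolding idx_def bij_betw_def by (simp add: the_inv_into_f_f)
  have row: "(\<Sum>Q\<in>F. K r Q * y $ idx Q) = (A *\<^sub>v y) $ r" if "r < n" "y \<in> carrier_vec n" for r y
  proof -
    have "(\<Sum>Q\<in>F. K r Q * y $ idx Q) = (\<Sum>c\<in>{..<n}. K r (enum c) * y $ idx (enum c))"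
      using sum.reindex_bij_betw[OF enum, of "\<lambda>Q. K r Q * y $ idx Q"] by simp
    also have "\<dots> = (\<Sum>c\<in>{0..<n}. K r (enum c) * y $ c)" using idx by (simp add: lessThan_atLeast0)
    also have "\<dots> = (A *\<^sub>v y) $ r"
      using that unfolding A_def by (simp add: mult_mat_vec_def scalar_prod_def)
    finally show ?thesis .
  qed
  have "det A \<noteq> 0"
  proof
    assume "det A = 0"
    then obtain y where y: "y \<in> carrier_vec n" "y \<noteq> 0\<^sub>v n" "A *\<^sub>v y = 0\<^sub>v n"
      using det_0_iff_vec_prod_zero_field[OF A] by blast
    have "\<forall>Q\<in>F. y $ idx Q = 0" using inj[of "\<lambda>Q. y $ idx Q"] row y by simp
    then have "y $ c = 0" if "c < n" for c
      using that idx bij_betw_apply[OF enum] by fastforce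
    with y show False by auto
  qed
  then obtain B where B: "B \<in> carrier_mat n n" "A * B = 1\<^sub>m n"
    using det_non_zero_imp_unit[OF A, of "()"] unfolding Units_def ring_mat_def by auto
  define y where "y = B *\<^sub>v vec n t"
  have y: "y \<in> carrier_vec n" using B by (simp add: y_def)
  have "A *\<^sub>v y = vec n t"
    unfolding y_def using A B by (simp add: assoc_mult_mat_vec[symmetric])
  then show ?thesis using row[OF _ y] by (intro exI[of _ "\<lambda>Q. y $ idx Q"]) auto
qed

section \<open>The medial graph\<close>

definition medial_edge :: "'v \<times> 'v \<times> 'v \<Rightarrow> 'v set \<times> 'v set" where
  "medial_edge t = ({fst t, fst (snd t)}, {fst (snd t), snd (snd t)})"

definition corner_wm :: "'v quad \<Rightarrow> 'v \<times> 'v \<times> 'v" where "corner_wm q = (bm q, wm q, bp q)"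

definition corner_bp :: "'v quad \<Rightarrow> 'v \<times> 'v \<times> 'v" where "corner_bp q = (wm q, bp q, wp q)"

definition corner_wp :: "'v quad \<Rightarrow> 'v \<times> 'v \<times> 'v" where "corner_wp q = (bp q, wp q, bm q)"

definition corner_bm :: "'v quad \<Rightarrow> 'v \<times> 'v \<times> 'v" where "corner_bm q = (wp q, bm q, wm q)"

lemmas corner_defs = corner_wm_def corner_bp_def corner_wp_def corner_bm_def

lemma triples_corners: "triples q = {corner_wm q, corner_bp q, corner_wp q, corner_bm q}"
  by (simp add: triples_def corner_defs)

lemma corners_in_triples:
  "corner_wm q \<in> triples q" "corner_bp q \<in> triples q" "corner_wp q \<in> triples q" "corner_bm q \<in> triples q"
  by (auto simp: triples_corners)

lemma swap_medial_edge: "prod.swap (medial_edge (u, v, w)) = medial_edge (w, v, u)"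
  by (auto simp: medial_edge_def)

lemma medial_edge_eq_iff:
  assumes "u \<noteq> v" "v \<noteq> w" "u \<noteq> w" "u' \<noteq> v'" "v' \<noteq> w'" "u' \<noteq> w'"
  shows "medial_edge (u, v, w) = medial_edge (u', v', w') \<longleftrightarrow> (u, v, w) = (u', v', w')"
  using assms by (auto simp: medial_edge_def doubleton_eq_iff)

lemma medial_edge_colors:
  assumes "u \<noteq> v" "v \<noteq> w" "u \<noteq> w"
  shows "black_Xe S (medial_edge (u, v, w)) \<longleftrightarrow> blk S u \<and> blk S w"
    and "white_Xe S (medial_edge (u, v, w)) \<longleftrightarrow> \<not> blk S u \<and> \<not> blk S w"
proof -
  have "(fst (medial_edge (u, v, w)) - snd (medial_edge (u, v, w))) \<union>
      (snd (medial_edge (u, v, w)) - fst (medial_edge (u, v, w))) = {u, w}"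
    using assms by (auto simp: medial_edge_def)
  then show "black_Xe S (medial_edge (u, v, w)) \<longleftrightarrow> blk S u \<and> blk S w"
    "white_Xe S (medial_edge (u, v, w)) \<longleftrightarrow> \<not> blk S u \<and> \<not> blk S w"
    by (simp_all add: black_Xe_def white_Xe_def)
qed

lemma black_Xe_swap: "black_Xe S (prod.swap e) = black_Xe S e"
  by (auto simp: black_Xe_def)

lemma white_Xe_swap: "white_Xe S (prod.swap e) = white_Xe S e"
  by (auto simp: white_Xe_def)

lemma pedges_Nil [simp]: "pedges [] = []"
  and pedges_single [simp]: "pedges [x] = []"
  and pedges_Cons_Cons [simp]: "pedges (x # y # zs) = (x, y) # pedges (y # zs)"
  by (simp_all add: pedges_def)

lemma pedges_Cons: "xs \<noteq> [] \<Longrightarrow> pedges (x # xs) = (x, hd xs) # pedges xs"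
  by (cases xs) auto

lemma pedges_append:
  "xs \<noteq> [] \<Longrightarrow> ys \<noteq> [] \<Longrightarrow> pedges (xs @ ys) = pedges xs @ [(last xs, hd ys)] @ pedges ys"
  by (induction xs rule: induct_list012) (auto simp: pedges_Cons)

lemma pedges_rev: "pedges (rev xs) = rev (map prod.swap (pedges xs))"
proof (induction xs)
  case (Cons a xs)
  then show ?case
    by (cases "xs = []") (simp_all add: pedges_append last_rev pedges_Cons)
qed simp

lemma sum_list_pedges_telescope:
  "xs \<noteq> [] \<Longrightarrow> sum_list (map (\<lambda>e. F (snd e) - F (fst e)) (pedges xs)) = F (last xs) - (F (hd xs) :: 'a :: ab_group_add)"
  by (induction xs rule: induct_list012) (simp_all add: pedges_Cons)

lemma sum_list_rev_swap:
  assumes "\<And>e. f (prod.swap e) = - f e"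
  shows "sum_list (map f (rev (map prod.swap L))) = - (sum_list (map f L) :: 'a :: ab_group_add)"
  using assms by (induction L) auto

locale discrete_surface =
  fixes S :: "('v, 'f) drs" and g :: nat
  assumes surface: "discrete_riemann_surface S g"
begin

lemma finite_verts: "finite (verts S)"
  and finite_faces: "finite (faces S)"
  and faces_nonempty: "faces S \<noteq> {}"
  and verts_eq: "verts S = (\<Union>Q\<in>faces S. qverts (quad S Q))"
  and link_connected: "v \<in> verts S \<Longrightarrow> u \<in> nbrs S v \<Longrightarrow> w \<in> nbrs S v \<Longrightarrow> (u, w) \<in> (link_rel S v)\<^sup>*"
  and adj_connected: "u \<in> verts S \<Longrightarrow> w \<in> verts S \<Longrightarrow> (u, w) \<in> (adj_rel S)\<^sup>*"
  and euler_characteristic: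
    "int (card (verts S)) - int (card (lam_edges S)) + int (card (faces S)) = 2 - 2 * int g"
  and Re_rho_pos: "Q \<in> faces S \<Longrightarrow> Re (rho S Q) > 0"
  using surface unfolding discrete_riemann_surface_def by blast+

lemma face_colors:
  assumes "Q \<in> faces S"
  shows "blk S (bm (quad S Q))" "blk S (bp (quad S Q))"
    "\<not> blk S (wm (quad S Q))" "\<not> blk S (wp (quad S Q))"
  using surface assms by (auto simp: discrete_riemann_surface_def)

lemma face_distinct:
  assumes "Q \<in> faces S"
  shows "bm (quad S Q) \<noteq> wm (quad S Q)" "bm (quad S Q) \<noteq> bp (quad S Q)" "bm (quad S Q) \<noteq> wp (quad S Q)"
    "wm (quad S Q) \<noteq> bp (quad S Q)" "wm (quad S Q) \<noteq> wp (quad S Q)" "bp (quad S Q) \<noteq> wp (quad S Q)"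
  using surface assms by (auto simp: discrete_riemann_surface_def cyc_def)

lemma face_verts:
  assumes "Q \<in> faces S"
  shows "bm (quad S Q) \<in> verts S" "wm (quad S Q) \<in> verts S" "bp (quad S Q) \<in> verts S" "wp (quad S Q) \<in> verts S"
  using assms verts_eq by (auto simp: qverts_def cyc_def)

lemma corners_distinct:
  assumes "Q \<in> faces S"
  shows "corner_wm (quad S Q) \<noteq> corner_bp (quad S Q)" "corner_wm (quad S Q) \<noteq> corner_wp (quad S Q)"
    "corner_wm (quad S Q) \<noteq> corner_bm (quad S Q)" "corner_bp (quad S Q) \<noteq> corner_wp (quad S Q)"
    "corner_bp (quad S Q) \<noteq> corner_bm (quad S Q)" "corner_wp (quad S Q) \<noteq> corner_bm (quad S Q)"
  using face_distinct[OF assms] by (auto simp: corner_defs)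

lemma triple_distinct:
  assumes "Q \<in> faces S" "(u, v, w) \<in> triples (quad S Q)"
  shows "u \<noteq> v" "v \<noteq> w" "u \<noteq> w"
  using assms face_distinct[OF assms(1)] by (auto simp: triples_def)

lemma triple_verts:
  "Q \<in> faces S \<Longrightarrow> (u, v, w) \<in> triples (quad S Q) \<Longrightarrow> u \<in> verts S \<and> v \<in> verts S \<and> w \<in> verts S"
  using face_verts by (auto simp: triples_def)

lemma triple_nbrs: "Q \<in> faces S \<Longrightarrow> (p, v, s) \<in> triples (quad S Q) \<Longrightarrow> p \<in> nbrs S v \<and> s \<in> nbrs S v"
  unfolding nbrs_def lam_edges_def triples_def quad_edges_def by (auto simp: insert_commute)

lemma dedge_face_unique:
  assumes Q: "Q \<in> faces S" and Q': "Q' \<in> faces S"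
    and "(u, v) \<in> dedges (quad S Q)" "(u, v) \<in> dedges (quad S Q')"
  shows "Q = Q'"
proof -
  have "(u, v) \<in> adj_rel S" using assms by (auto simp: adj_rel_def)
  then have "card {Q\<in>faces S. (u, v) \<in> dedges (quad S Q)} = 1"
    using surface by (auto simp: discrete_riemann_surface_def)
  then obtain x where x: "{Q\<in>faces S. (u, v) \<in> dedges (quad S Q)} = {x}"
    by (auto simp: card_1_singleton_iff)
  have "Q \<in> {Q\<in>faces S. (u, v) \<in> dedges (quad S Q)}" "Q' \<in> {Q\<in>faces S. (u, v) \<in> dedges (quad S Q)}"
    using assms by auto
  then show ?thesis unfolding x by simp
qed

lemma no_common_triangle:
  assumes Q: "Q \<in> faces S" and Q': "Q' \<in> faces S" and "Q \<noteq> Q'"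
    and sub: "{u, v, w} \<subseteq> qverts (quad S Q)" "{u, v, w} \<subseteq> qverts (quad S Q')"
    and d: "u \<noteq> v" "v \<noteq> w" "u \<noteq> w"
  shows False
proof -
  define I where "I = qverts (quad S Q) \<inter> qverts (quad S Q')"
  have I: "I = {} \<or> card I = 1 \<or> I \<in> quad_edges (quad S Q)"
    using surface assms(1-3) unfolding discrete_riemann_surface_def I_def Let_def by blast
  have "card {u, v, w} \<le> card I"
    using sub by (intro card_mono) (auto simp: I_def qverts_def)
  then have "3 \<le> card I" using d by simp
  moreover have "card x \<le> 2" if "x \<in> quad_edges q" for x :: "'v set" and q
    using that by (auto simp: quad_edges_def card_insert_if)
  ultimately show False using I by fastforce
qed

lemma medial_edge_inj:
  assumes Q: "Q \<in> faces S" and Q': "Q' \<in> faces S"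
    and t: "t \<in> triples (quad S Q)" and t': "t' \<in> triples (quad S Q')"
    and eq: "medial_edge t = medial_edge t'"
  shows "Q = Q' \<and> t = t'"
proof -
  obtain u v w u' v' w' where tt: "t = (u, v, w)" "t' = (u', v', w')" by (cases t, cases t') auto
  have "t = t'"
    using eq medial_edge_eq_iff[OF triple_distinct[OF Q] triple_distinct[OF Q']] t t' tt by simp
  moreover have "(u, v) \<in> dedges (quad S Q)" "(u, v) \<in> dedges (quad S Q')"
    using t t' tt calculation by (auto simp: triples_def dedges_def)
  ultimately show ?thesis using dedge_face_unique[OF Q Q'] by blast
qed

text \<open>Inside one face this would need two corners with the same middle vertex, in two faces
  a common triangle, which strong regularity excludes.\<close>
lemma medial_edge_ne_swap:
  assumes Q: "Q \<in> faces S" and Q': "Q' \<in> faces S"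
    and t: "t \<in> triples (quad S Q)" and t': "t' \<in> triples (quad S Q')"
  shows "medial_edge t \<noteq> prod.swap (medial_edge t')"
proof
  assume eq: "medial_edge t = prod.swap (medial_edge t')"
  obtain u v w u' v' w' where tt: "t = (u, v, w)" "t' = (u', v', w')" by (cases t, cases t') auto
  have d: "u \<noteq> v" "v \<noteq> w" "u \<noteq> w" using triple_distinct[OF Q] t tt by auto
  have d': "w' \<noteq> v'" "v' \<noteq> u'" "w' \<noteq> u'" using triple_distinct[OF Q', of u' v' w'] t' tt by auto
  have "(u, v, w) = (w', v', u')" using eq tt swap_medial_edge medial_edge_eq_iff[OF d d'] by metis
  then have t'': "(w, v, u) \<in> triples (quad S Q')" using t' tt by simp
  show False
  proof (cases "Q = Q'")
    case True
    then show False using t t'' tt d face_distinct[OF Q] by (auto simp: triples_def)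
  next
    case False
    have "{u, v, w} \<subseteq> qverts (quad S Q)" "{u, v, w} \<subseteq> qverts (quad S Q')"
      using t t'' tt by (auto simp: triples_def qverts_def cyc_def)
    then show False using no_common_triangle[OF Q Q' False _ _ d] by blast
  qed
qed

lemma Xedges_iff:
  "e \<in> Xedges S \<longleftrightarrow> (\<exists>Q\<in>faces S. \<exists>t\<in>triples (quad S Q). e = medial_edge t \<or> e = prod.swap (medial_edge t))"
proof
  assume "e \<in> Xedges S"
  then obtain u v w Q where e: "e = ({u, v}, {v, w})" and Q: "Q \<in> faces S"
    and "(u, v, w) \<in> triples (quad S Q) \<or> (w, v, u) \<in> triples (quad S Q)"
    unfolding Xedges_def by blast
  moreover have "e = medial_edge (u, v, w)" "e = prod.swap (medial_edge (w, v, u))"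
    using e by (auto simp: medial_edge_def)
  ultimately show "\<exists>Q\<in>faces S. \<exists>t\<in>triples (quad S Q). e = medial_edge t \<or> e = prod.swap (medial_edge t)"
    by blast
next
  assume "\<exists>Q\<in>faces S. \<exists>t\<in>triples (quad S Q). e = medial_edge t \<or> e = prod.swap (medial_edge t)"
  then obtain Q u v w where "Q \<in> faces S" "(u, v, w) \<in> triples (quad S Q)"
    "e = ({u, v}, {v, w}) \<or> e = ({w, v}, {v, u})"
    by (auto simp: medial_edge_def insert_commute)
  then show "e \<in> Xedges S" unfolding Xedges_def by blast
qed

lemma medial_edge_in_Xedges:
  assumes "Q \<in> faces S" "t \<in> triples (quad S Q)"
  shows "medial_edge t \<in> Xedges S" "prod.swap (medial_edge t) \<in> Xedges S"
  using assms Xedges_iff by blast+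

lemma swap_in_Xedges: "e \<in> Xedges S \<Longrightarrow> prod.swap e \<in> Xedges S"
  unfolding Xedges_iff by (metis swap_swap)

lemma corner_colors:
  assumes "Q \<in> faces S"
  shows "black_Xe S (medial_edge (corner_wm (quad S Q)))" "black_Xe S (medial_edge (corner_wp (quad S Q)))"
    "\<not> black_Xe S (medial_edge (corner_bp (quad S Q)))" "\<not> black_Xe S (medial_edge (corner_bm (quad S Q)))"
    "white_Xe S (medial_edge (corner_bp (quad S Q)))" "white_Xe S (medial_edge (corner_bm (quad S Q)))"
    "\<not> white_Xe S (medial_edge (corner_wm (quad S Q)))" "\<not> white_Xe S (medial_edge (corner_wp (quad S Q)))"
  using face_distinct[OF assms] face_distinct[OF assms, THEN not_sym] face_colors[OF assms]
  by (simp_all add: corner_defs medial_edge_colors)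

lemma FQ_edges_eq: "FQ_edges q = medial_edge ` triples q"
  unfolding FQ_edges_def medial_edge_def by force

lemma sum_triples:
  assumes "Q \<in> faces S"
  shows "(\<Sum>t\<in>triples (quad S Q). h t) =
    h (corner_wm (quad S Q)) + h (corner_bp (quad S Q)) + h (corner_wp (quad S Q)) + h (corner_bm (quad S Q))"
  unfolding triples_corners using corners_distinct[OF assms] by (simp add: add.assoc)

lemma sum_FQ_edges:
  assumes Q: "Q \<in> faces S"
  shows "(\<Sum>e\<in>FQ_edges (quad S Q). f e) = f (medial_edge (corner_wm (quad S Q))) +
    f (medial_edge (corner_bp (quad S Q))) + f (medial_edge (corner_wp (quad S Q))) + f (medial_edge (corner_bm (quad S Q)))"
proof -
  have "inj_on medial_edge (triples (quad S Q))" by (auto simp: inj_on_def dest: medial_edge_inj[OF Q Q])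
  then have "(\<Sum>e\<in>FQ_edges (quad S Q). f e) = (\<Sum>t\<in>triples (quad S Q). f (medial_edge t))"
    unfolding FQ_edges_eq by (simp add: sum.reindex)
  then show ?thesis by (simp add: sum_triples[OF Q])
qed

lemma Fv_edges_eq:
  "Fv_edges S v = (\<lambda>(Q, t). medial_edge t) ` (SIGMA Q:faces S. {t\<in>triples (quad S Q). fst (snd t) = v})"
  unfolding Fv_edges_def medial_edge_def by force

lemma sum_Fv_edges:
  "(\<Sum>e\<in>Fv_edges S v. f e) = (\<Sum>Q\<in>faces S.
     (if wm (quad S Q) = v then f (medial_edge (corner_wm (quad S Q))) else 0) +
     (if bp (quad S Q) = v then f (medial_edge (corner_bp (quad S Q))) else 0) +
     (if wp (quad S Q) = v then f (medial_edge (corner_wp (quad S Q))) else 0) +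
     (if bm (quad S Q) = v then f (medial_edge (corner_bm (quad S Q))) else 0))" (is "_ = ?rhs")
proof -
  define T where "T = (SIGMA Q:faces S. {t\<in>triples (quad S Q). fst (snd t) = v})"
  have "Fv_edges S v = (\<lambda>(Q, t). medial_edge t) ` T" unfolding T_def by (rule Fv_edges_eq)
  moreover have "inj_on (\<lambda>(Q, t). medial_edge t) T"
    unfolding T_def by (auto simp: inj_on_def dest: medial_edge_inj)
  ultimately have "(\<Sum>e\<in>Fv_edges S v. f e) = (\<Sum>(Q, t)\<in>T. f (medial_edge t))"
    by (simp add: sum.reindex split_def)
  also have "\<dots> = (\<Sum>Q\<in>faces S. \<Sum>t\<in>{t\<in>triples (quad S Q). fst (snd t) = v}. f (medial_edge t))"
    unfolding T_def by (rule sum.Sigma[symmetric]) (use finite_faces in \<open>auto simp: triples_def\<close>)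
  also have "\<dots> = (\<Sum>Q\<in>faces S. \<Sum>t\<in>triples (quad S Q). if fst (snd t) = v then f (medial_edge t) else 0)"
    by (intro sum.cong refl sum.inter_filter) (simp add: triples_def)
  also have "\<dots> = ?rhs" by (intro sum.cong refl) (simp add: sum_triples corner_defs)
  finally show ?thesis .
qed

lemma Fv_edges_subset: "Fv_edges S v \<subseteq> Xedges S"
  unfolding Fv_edges_eq using medial_edge_in_Xedges(1) by (auto simp del: prod.collapse)

lemma cycle_chain_FQ_medial_edge:
  assumes Q0: "Q0 \<in> faces S" and Q: "Q \<in> faces S" and t: "t \<in> triples (quad S Q)"
  shows "cycle_chain (FQ_edges (quad S Q0)) (medial_edge t) = (if Q = Q0 then 1 else 0)"
proof -
  have "medial_edge t \<in> FQ_edges (quad S Q0) \<longleftrightarrow> Q = Q0"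
    using medial_edge_inj[OF Q Q0 t] t by (auto simp: FQ_edges_eq)
  moreover have "prod.swap (medial_edge t) \<notin> FQ_edges (quad S Q0)"
    unfolding FQ_edges_eq using medial_edge_ne_swap[OF Q0 Q _ t] by (metis imageE)
  ultimately show ?thesis by (simp add: cycle_chain_def prod.swap_def)
qed

lemma cycle_chain_Fv_medial_edge:
  assumes Q: "Q \<in> faces S" and t: "t \<in> triples (quad S Q)"
  shows "cycle_chain (Fv_edges S v) (medial_edge t) = (if fst (snd t) = v then 1 else 0)"
proof -
  have "medial_edge t \<in> Fv_edges S v \<longleftrightarrow> fst (snd t) = v"
    using medial_edge_inj[OF Q _ t] Q t by (force simp: Fv_edges_eq)
  moreover have "prod.swap (medial_edge t) \<notin> Fv_edges S v"
  proof
    assume "prod.swap (medial_edge t) \<in> Fv_edges S v"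
    then obtain Q' t' where "Q' \<in> faces S" "t' \<in> triples (quad S Q')" "prod.swap (medial_edge t) = medial_edge t'"
      unfolding Fv_edges_eq by (auto simp del: prod.collapse)
    then show False using medial_edge_ne_swap[OF _ Q _ t] by metis
  qed
  ultimately show ?thesis by (simp add: cycle_chain_def prod.swap_def)
qed

lemma link_rel_Xpath:
  assumes "(u, w) \<in> (link_rel S v)\<^sup>*"
  shows "({u, v}, {w, v}) \<in> (Xedges S)\<^sup>*"
  using assms
proof (induction rule: rtrancl_induct)
  case (step p s)
  then obtain Q where Q: "Q \<in> faces S" and t: "(p, v, s) \<in> triples (quad S Q)"
    unfolding link_rel_def by blast
  have "({p, v}, {s, v}) \<in> Xedges S"
    using medial_edge_in_Xedges(1)[OF Q t] by (simp add: medial_edge_def insert_commute)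
  with step.IH show ?case by simp
qed simp

lemma Xedges_connected:
  assumes z0: "z0 \<in> nbrs S u0" and z: "z \<in> nbrs S u"
  shows "({u0, z0}, {u, z}) \<in> (Xedges S)\<^sup>*"
proof -
  have nbrs_verts: "v \<in> verts S" if "x \<in> nbrs S v" for x v
    using that unfolding nbrs_def lam_edges_def verts_eq quad_edges_def qverts_def cyc_def by auto
  have nbrs_sym: "x \<in> nbrs S v \<longleftrightarrow> v \<in> nbrs S x" for x v
    by (simp add: nbrs_def insert_commute)
  have "(u0, u) \<in> (adj_rel S)\<^sup>*"
    using adj_connected nbrs_verts nbrs_sym z0 z by blast
  then show ?thesis using z
  proof (induction arbitrary: z rule: rtrancl_induct)
    case base
    then show ?case
      using link_rel_Xpath link_connected nbrs_verts z0 by (metis insert_commute)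
  next
    case (step w u)
    then have wu: "u \<in> nbrs S w" "w \<in> nbrs S u"
      unfolding adj_rel_def nbrs_def lam_edges_def dedges_def quad_edges_def by (auto simp: insert_commute)
    have "({u0, z0}, {w, u}) \<in> (Xedges S)\<^sup>*" using step.IH[OF wu(1)] .
    moreover have "({w, u}, {z, u}) \<in> (Xedges S)\<^sup>*"
      using link_rel_Xpath link_connected[OF nbrs_verts[OF wu(2)] wu(2) step.prems] .
    ultimately show ?case by (simp add: insert_commute)
  qed
qed

lemma rtrancl_Xedges_path:
  assumes "(x, y) \<in> (Xedges S)\<^sup>*"
  shows "\<exists>p. p \<noteq> [] \<and> hd p = x \<and> last p = y \<and> set (pedges p) \<subseteq> Xedges S"
  using assms
proof (induction rule: rtrancl_induct)
  case base
  then show ?case by (intro exI[of _ "[x]"]) simp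
next
  case (step y z)
  then obtain p where "p \<noteq> []" "hd p = x" "last p = y" "set (pedges p) \<subseteq> Xedges S" by blast
  then show ?case using step.hyps(2) by (intro exI[of _ "p @ [z]"]) (auto simp: pedges_append)
qed

end

section \<open>One-forms of type \<Diamond>\<close>

definition unit_chain :: "'a \<times> 'a \<Rightarrow> 'a \<times> 'a \<Rightarrow> complex" where
  "unit_chain x e = (if e = x then 1 else 0) - (if e = prod.swap x then 1 else 0)"

definition chain_of :: "('a \<times> 'a) list \<Rightarrow> 'a \<times> 'a \<Rightarrow> int" where
  "chain_of L x = int (count_list L x) - int (count_list L (prod.swap x))"

definition black_form :: "('v, 'f) drs \<Rightarrow> ('f \<Rightarrow> complex) \<Rightarrow> 'v set \<times> 'v set \<Rightarrow> complex" where
  "black_form S \<theta> e = (\<Sum>Q\<in>faces S. \<theta> Q *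
     (unit_chain (medial_edge (corner_wm (quad S Q))) e - unit_chain (medial_edge (corner_wp (quad S Q))) e))"

definition white_form :: "('v, 'f) drs \<Rightarrow> ('f \<Rightarrow> complex) \<Rightarrow> 'v set \<times> 'v set \<Rightarrow> complex" where
  "white_form S \<kappa> e = (\<Sum>Q\<in>faces S. \<kappa> Q *
     (unit_chain (medial_edge (corner_bp (quad S Q))) e - unit_chain (medial_edge (corner_bm (quad S Q))) e))"

definition black_count :: "('v set \<times> 'v set \<Rightarrow> int) \<Rightarrow> 'v quad \<Rightarrow> int" where
  "black_count c q = c (medial_edge (corner_wm q)) - c (medial_edge (corner_wp q))"

definition white_count :: "('v set \<times> 'v set \<Rightarrow> int) \<Rightarrow> 'v quad \<Rightarrow> int" where
  "white_count c q = c (medial_edge (corner_bp q)) - c (medial_edge (corner_bm q))"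

definition black_integral :: "('v, 'f) drs \<Rightarrow> ('f \<Rightarrow> complex) \<Rightarrow> ('v set \<times> 'v set \<Rightarrow> int) \<Rightarrow> complex" where
  "black_integral S \<theta> c = (\<Sum>Q\<in>faces S. \<theta> Q * of_int (black_count c (quad S Q)))"

definition white_integral :: "('v, 'f) drs \<Rightarrow> ('f \<Rightarrow> complex) \<Rightarrow> ('v set \<times> 'v set \<Rightarrow> int) \<Rightarrow> complex" where
  "white_integral S \<kappa> c = (\<Sum>Q\<in>faces S. \<kappa> Q * of_int (white_count c (quad S Q)))"

definition black_circulation :: "('v, 'f) drs \<Rightarrow> ('f \<Rightarrow> complex) \<Rightarrow> 'v \<Rightarrow> complex" where
  "black_circulation S \<theta> v = (\<Sum>Q\<in>faces S. \<theta> Q *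
     ((if wm (quad S Q) = v then 1 else 0) - (if wp (quad S Q) = v then 1 else 0)))"

definition white_circulation :: "('v, 'f) drs \<Rightarrow> ('f \<Rightarrow> complex) \<Rightarrow> 'v \<Rightarrow> complex" where
  "white_circulation S \<kappa> v = (\<Sum>Q\<in>faces S. \<kappa> Q *
     ((if bp (quad S Q) = v then 1 else 0) - (if bm (quad S Q) = v then 1 else 0)))"

lemma unit_chain_swap: "unit_chain x (prod.swap e) = - unit_chain x e"
proof -
  have "prod.swap e = x \<longleftrightarrow> e = prod.swap x" "prod.swap e = prod.swap x \<longleftrightarrow> e = x"
    by (metis swap_swap)+
  then show ?thesis by (simp add: unit_chain_def)
qed

lemma black_form_swap: "black_form S \<theta> (prod.swap e) = - black_form S \<theta> e"
  unfolding black_form_def unit_chain_swap sum_negf[symmetric] by (rule sum.cong) (simp_all add: algebra_simps)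

lemma white_form_swap: "white_form S \<kappa> (prod.swap e) = - white_form S \<kappa> e"
  unfolding white_form_def unit_chain_swap sum_negf[symmetric] by (rule sum.cong) (simp_all add: algebra_simps)

lemma pchain_eq_chain_of: "pchain xs = chain_of (pedges xs)"
  by (simp add: fun_eq_iff pchain_def chain_of_def prod.swap_def)

lemma sum_list_unit_chain: "sum_list (map (unit_chain x) L) = of_int (chain_of L x)"
  by (induction L) (auto simp: unit_chain_def chain_of_def)

lemma chain_of_filter:
  assumes "P (prod.swap x) = P x"
  shows "chain_of (filter P L) x = (if P x then chain_of L x else 0)"
  using assms by (induction L) (auto simp: chain_of_def)

lemma sum_list_sum_swap: "sum_list (map (\<lambda>e. \<Sum>Q\<in>A. F Q e) L) = (\<Sum>Q\<in>A. sum_list (map (F Q) L))"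
  by (induction L) (auto simp: sum.distrib)

lemma sum_list_black_form: "sum_list (map (black_form S \<theta>) L) = black_integral S \<theta> (chain_of L)"
  unfolding black_form_def black_integral_def black_count_def sum_list_sum_swap
  by (simp add: sum_list_const_mult sum_list_subtractf sum_list_unit_chain)

lemma sum_list_white_form: "sum_list (map (white_form S \<kappa>) L) = white_integral S \<kappa> (chain_of L)"
  unfolding white_form_def white_integral_def white_count_def sum_list_sum_swap
  by (simp add: sum_list_const_mult sum_list_subtractf sum_list_unit_chain)

lemma black_integral_diff: "black_integral S \<theta> (\<lambda>e. c e - c' e) = black_integral S \<theta> c - black_integral S \<theta> c'"
  unfolding black_integral_def black_count_def by (simp add: sum_subtractf[symmetric] algebra_simps)

lemma white_integral_diff: "white_integral S \<kappa> (\<lambda>e. c e - c' e) = white_integral S \<kappa> c - white_integral S \<kappa> c'"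
  unfolding white_integral_def white_count_def by (simp add: sum_subtractf[symmetric] algebra_simps)

lemma black_integral_add: "black_integral S \<theta> (\<lambda>e. c e + c' e) = black_integral S \<theta> c + black_integral S \<theta> c'"
  unfolding black_integral_def black_count_def by (simp add: sum.distrib[symmetric] algebra_simps)

lemma white_integral_add: "white_integral S \<kappa> (\<lambda>e. c e + c' e) = white_integral S \<kappa> c + white_integral S \<kappa> c'"
  unfolding white_integral_def white_count_def by (simp add: sum.distrib[symmetric] algebra_simps)

lemma sum_of_int_lincomb:
  "(\<Sum>Q\<in>F. a Q * of_int (\<Sum>i\<in>I. m i * x i Q)) = (\<Sum>i\<in>I. of_int (m i) * (\<Sum>Q\<in>F. a Q * of_int (x i Q)) :: 'a :: comm_ring_1)"
proof -
  have "(\<Sum>Q\<in>F. a Q * of_int (\<Sum>i\<in>I. m i * x i Q)) = (\<Sum>Q\<in>F. \<Sum>i\<in>I. of_int (m i) * (a Q * of_int (x i Q)))"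
    by (simp add: sum_distrib_left mult.left_commute)
  also have "\<dots> = (\<Sum>i\<in>I. of_int (m i) * (\<Sum>Q\<in>F. a Q * of_int (x i Q)))"
    by (subst sum.swap) (simp add: sum_distrib_left)
  finally show ?thesis .
qed

lemma black_integral_lincomb:
  "black_integral S \<theta> (\<lambda>e. \<Sum>i\<in>I. m i * c i e) = (\<Sum>i\<in>I. of_int (m i) * black_integral S \<theta> (c i))"
proof -
  have "black_count (\<lambda>e. \<Sum>i\<in>I. m i * c i e) q = (\<Sum>i\<in>I. m i * black_count (c i) q)" for q
    by (simp add: black_count_def sum_subtractf right_diff_distrib)
  then show ?thesis unfolding black_integral_def by (simp only: sum_of_int_lincomb)
qed

lemma white_integral_lincomb:
  "white_integral S \<kappa> (\<lambda>e. \<Sum>i\<in>I. m i * c i e) = (\<Sum>i\<in>I. of_int (m i) * white_integral S \<kappa> (c i))"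
proof -
  have "white_count (\<lambda>e. \<Sum>i\<in>I. m i * c i e) q = (\<Sum>i\<in>I. m i * white_count (c i) q)" for q
    by (simp add: white_count_def sum_subtractf right_diff_distrib)
  then show ?thesis unfolding white_integral_def by (simp only: sum_of_int_lincomb)
qed

lemma black_circulation_diff:
  "black_circulation S (\<lambda>Q. \<theta> Q - \<theta>' Q) v = black_circulation S \<theta> v - black_circulation S \<theta>' v"
  unfolding black_circulation_def by (simp add: left_diff_distrib sum_subtractf)

lemma white_circulation_diff:
  "white_circulation S (\<lambda>Q. \<kappa> Q - \<kappa>' Q) v = white_circulation S \<kappa> v - white_circulation S \<kappa>' v"
  unfolding white_circulation_def by (simp add: left_diff_distrib sum_subtractf)

lemma black_integral_coeff_diff:
  "black_integral S (\<lambda>Q. \<theta> Q - \<theta>' Q) c = black_integral S \<theta> c - black_integral S \<theta>' c"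
  unfolding black_integral_def by (simp add: left_diff_distrib sum_subtractf)

lemma white_integral_coeff_diff:
  "white_integral S (\<lambda>Q. \<kappa> Q - \<kappa>' Q) c = white_integral S \<kappa> c - white_integral S \<kappa>' c"
  unfolding white_integral_def by (simp add: left_diff_distrib sum_subtractf)

lemma sum_coeff_lincomb:
  "(\<Sum>Q\<in>F. (a Q - (\<Sum>i\<in>I. c i * b i Q)) * w Q) =
     (\<Sum>Q\<in>F. a Q * w Q) - (\<Sum>i\<in>I. c i * (\<Sum>Q\<in>F. b i Q * w Q) :: 'a :: comm_ring_1)"
proof -
  have "(\<Sum>Q\<in>F. (a Q - (\<Sum>i\<in>I. c i * b i Q)) * w Q) =
      (\<Sum>Q\<in>F. a Q * w Q) - (\<Sum>Q\<in>F. \<Sum>i\<in>I. c i * (b i Q * w Q))"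
    by (simp add: left_diff_distrib sum_subtractf sum_distrib_right mult.assoc)
  also have "(\<Sum>Q\<in>F. \<Sum>i\<in>I. c i * (b i Q * w Q)) = (\<Sum>i\<in>I. c i * (\<Sum>Q\<in>F. b i Q * w Q))"
    by (subst sum.swap) (simp add: sum_distrib_left)
  finally show ?thesis .
qed

lemma white_circulation_coeff_lincomb:
  "white_circulation S (\<lambda>Q. a Q - (\<Sum>i\<in>I. c i * b i Q)) v =
     white_circulation S a v - (\<Sum>i\<in>I. c i * white_circulation S (b i) v)"
  unfolding white_circulation_def by (rule sum_coeff_lincomb)

lemma white_integral_coeff_lincomb:
  "white_integral S (\<lambda>Q. a Q - (\<Sum>i\<in>I. c i * b i Q)) x =
     white_integral S a x - (\<Sum>i\<in>I. c i * white_integral S (b i) x)"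
  unfolding white_integral_def by (rule sum_coeff_lincomb)

lemma white_circulation_cnj: "white_circulation S (\<lambda>Q. cnj (\<kappa> Q)) v = cnj (white_circulation S \<kappa> v)"
  unfolding white_circulation_def cnj_sum by (rule sum.cong) auto

lemma white_integral_cnj: "white_integral S (\<lambda>Q. cnj (\<kappa> Q)) x = cnj (white_integral S \<kappa> x)"
  unfolding white_integral_def by (simp add: cnj_sum)

lemma Bcount_eq_black_count: "Bcount xs q = black_count (pchain xs) q"
  by (simp add: Bcount_def black_count_def pchain_def medial_edge_def corner_defs insert_commute)

lemma Wcount_eq_white_count: "Wcount xs q = white_count (pchain xs) q"
  by (simp add: Wcount_def white_count_def pchain_def medial_edge_def corner_defs insert_commute)

lemma white_integral_Bcount:
  "white_integral S (\<lambda>Q. of_int (Bcount xs (quad S Q))) (pchain ys) = of_int (intersection S xs ys)"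
  by (simp add: white_integral_def intersection_def Wcount_eq_white_count)

lemma black_integral_eq_sum_Bcount:
  "black_integral S \<theta> (pchain xs) = (\<Sum>Q\<in>faces S. \<theta> Q * of_int (Bcount xs (quad S Q)))"
  by (simp add: black_integral_def Bcount_eq_black_count)

context discrete_surface
begin

lemma unit_chain_medial_edge:
  assumes Q0: "Q0 \<in> faces S" and Q: "Q \<in> faces S"
    and t0: "t0 \<in> triples (quad S Q0)" and t: "t \<in> triples (quad S Q)"
  shows "unit_chain (medial_edge t) (medial_edge t0) = (if Q = Q0 \<and> t = t0 then 1 else 0)"
  using medial_edge_inj[OF Q0 Q t0 t] medial_edge_ne_swap[OF Q0 Q t0 t] unfolding unit_chain_def by auto

lemma black_form_medial_edge:
  assumes Q: "Q \<in> faces S" and t: "t \<in> triples (quad S Q)"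
  shows "black_form S \<theta> (medial_edge t) =
    \<theta> Q * ((if t = corner_wm (quad S Q) then 1 else 0) - (if t = corner_wp (quad S Q) then 1 else 0))"
proof -
  have "black_form S \<theta> (medial_edge t) = (\<Sum>Q'\<in>faces S. if Q' = Q then
      \<theta> Q' * ((if t = corner_wm (quad S Q') then 1 else 0) - (if t = corner_wp (quad S Q') then 1 else 0)) else 0)"
    unfolding black_form_def
    using unit_chain_medial_edge[OF Q _ t corners_in_triples(1)] unit_chain_medial_edge[OF Q _ t corners_in_triples(3)]
    by (intro sum.cong refl) auto
  then show ?thesis using Q finite_faces by (simp add: sum.delta)
qed

lemma white_form_medial_edge:
  assumes Q: "Q \<in> faces S" and t: "t \<in> triples (quad S Q)"
  shows "white_form S \<kappa> (medial_edge t) =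
    \<kappa> Q * ((if t = corner_bp (quad S Q) then 1 else 0) - (if t = corner_bm (quad S Q) then 1 else 0))"
proof -
  have "white_form S \<kappa> (medial_edge t) = (\<Sum>Q'\<in>faces S. if Q' = Q then
      \<kappa> Q' * ((if t = corner_bp (quad S Q') then 1 else 0) - (if t = corner_bm (quad S Q') then 1 else 0)) else 0)"
    unfolding white_form_def
    using unit_chain_medial_edge[OF Q _ t corners_in_triples(2)] unit_chain_medial_edge[OF Q _ t corners_in_triples(4)]
    by (intro sum.cong refl) auto
  then show ?thesis using Q finite_faces by (simp add: sum.delta)
qed

lemma black_form_corners:
  assumes "Q \<in> faces S"
  shows "black_form S \<theta> (medial_edge (corner_wm (quad S Q))) = \<theta> Q"
    "black_form S \<theta> (medial_edge (corner_bp (quad S Q))) = 0"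
    "black_form S \<theta> (medial_edge (corner_wp (quad S Q))) = - \<theta> Q"
    "black_form S \<theta> (medial_edge (corner_bm (quad S Q))) = 0"
  using corners_distinct[OF assms] by (simp_all add: black_form_medial_edge[OF assms] corners_in_triples)

lemma white_form_corners:
  assumes "Q \<in> faces S"
  shows "white_form S \<kappa> (medial_edge (corner_wm (quad S Q))) = 0"
    "white_form S \<kappa> (medial_edge (corner_bp (quad S Q))) = \<kappa> Q"
    "white_form S \<kappa> (medial_edge (corner_wp (quad S Q))) = 0"
    "white_form S \<kappa> (medial_edge (corner_bm (quad S Q))) = - \<kappa> Q"
  using corners_distinct[OF assms] by (simp_all add: white_form_medial_edge[OF assms] corners_in_triples)

lemma unit_chain_outside_Xedges:
  assumes "e \<notin> Xedges S" "Q \<in> faces S" "t \<in> triples (quad S Q)"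
  shows "unit_chain (medial_edge t) e = 0"
  using assms medial_edge_in_Xedges[OF assms(2,3)] unfolding unit_chain_def by auto

lemma black_white_one_form: "one_form S (\<lambda>e. black_form S \<theta> e + white_form S \<kappa> e)"
proof -
  have "black_form S \<theta> e = 0" "white_form S \<kappa> e = 0" if "e \<notin> Xedges S" for e
    unfolding black_form_def white_form_def
    by (simp_all add: unit_chain_outside_Xedges[OF that] corners_in_triples)
  then show ?thesis
    unfolding one_form_def prod.swap_def[symmetric] black_form_swap white_form_swap by simp
qed

lemma one_form_eqI:
  assumes "one_form S \<omega>" "one_form S \<omega>'"
    and eq: "\<And>Q t. Q \<in> faces S \<Longrightarrow> t \<in> triples (quad S Q) \<Longrightarrow> \<omega> (medial_edge t) = \<omega>' (medial_edge t)"
  shows "\<omega> = \<omega>'"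
proof
  fix e
  show "\<omega> e = \<omega>' e"
  proof (cases "e \<in> Xedges S")
    case True
    then obtain Q t where Q: "Q \<in> faces S" and t: "t \<in> triples (quad S Q)"
      and "e = medial_edge t \<or> e = prod.swap (medial_edge t)"
      unfolding Xedges_iff by blast
    moreover have me: "\<omega> (medial_edge t) = \<omega>' (medial_edge t)" by (rule eq[OF Q t])
    moreover have "\<omega> (prod.swap (medial_edge t)) = \<omega>' (prod.swap (medial_edge t))"
      using assms(1,2) medial_edge_in_Xedges(1)[OF Q t] me by (simp add: one_form_def prod.swap_def)
    ultimately show ?thesis by blast
  next
    case False
    then show ?thesis using assms(1,2) unfolding one_form_def by metis
  qed
qed

lemma sum_Fv_black_form: "(\<Sum>e\<in>Fv_edges S v. black_form S \<theta> e) = black_circulation S \<theta> v"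
  unfolding sum_Fv_edges black_circulation_def
  by (intro sum.cong refl) (simp add: black_form_corners algebra_simps)

lemma sum_Fv_white_form: "(\<Sum>e\<in>Fv_edges S v. white_form S \<kappa> e) = white_circulation S \<kappa> v"
  unfolding sum_Fv_edges white_circulation_def
  by (intro sum.cong refl) (simp add: white_form_corners algebra_simps)

lemma black_circulation_black: "blk S v \<Longrightarrow> black_circulation S \<theta> v = 0"
  unfolding black_circulation_def using face_colors by (intro sum.neutral) auto

lemma white_circulation_white: "\<not> blk S v \<Longrightarrow> white_circulation S \<kappa> v = 0"
  unfolding white_circulation_def using face_colors by (intro sum.neutral) auto

lemma counts_filter_colors:
  assumes "Q \<in> faces S"
  shows "black_count (chain_of (filter (black_Xe S) L)) (quad S Q) = black_count (chain_of L) (quad S Q)"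
    "white_count (chain_of (filter (black_Xe S) L)) (quad S Q) = 0"
    "white_count (chain_of (filter (white_Xe S) L)) (quad S Q) = white_count (chain_of L) (quad S Q)"
    "black_count (chain_of (filter (white_Xe S) L)) (quad S Q) = 0"
  using corner_colors[OF assms]
  by (simp_all add: black_count_def white_count_def chain_of_filter black_Xe_swap white_Xe_swap)

lemma black_integral_cycle_FQ: "Q \<in> faces S \<Longrightarrow> black_integral S \<theta> (cycle_chain (FQ_edges (quad S Q))) = 0"
  unfolding black_integral_def black_count_def by (simp add: cycle_chain_FQ_medial_edge corners_in_triples)

lemma white_integral_cycle_FQ: "Q \<in> faces S \<Longrightarrow> white_integral S \<kappa> (cycle_chain (FQ_edges (quad S Q))) = 0"
  unfolding white_integral_def white_count_def by (simp add: cycle_chain_FQ_medial_edge corners_in_triples)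

lemma black_integral_cycle_Fv: "black_integral S \<theta> (cycle_chain (Fv_edges S v)) = black_circulation S \<theta> v"
  unfolding black_integral_def black_count_def black_circulation_def
  by (intro sum.cong refl) (simp add: cycle_chain_Fv_medial_edge[OF _ corners_in_triples(1)]
      cycle_chain_Fv_medial_edge[OF _ corners_in_triples(3)], simp add: corner_defs)

lemma white_integral_cycle_Fv: "white_integral S \<kappa> (cycle_chain (Fv_edges S v)) = white_circulation S \<kappa> v"
  unfolding white_integral_def white_count_def white_circulation_def
  by (intro sum.cong refl) (simp add: cycle_chain_Fv_medial_edge[OF _ corners_in_triples(2)]
      cycle_chain_Fv_medial_edge[OF _ corners_in_triples(4)], simp add: corner_defs)

lemma black_integral_homologous:
  assumes "homologous S c c'" and closed: "\<forall>v\<in>verts S. black_circulation S \<theta> v = 0"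
  shows "black_integral S \<theta> c = black_integral S \<theta> c'"
proof -
  obtain cf cv where "\<forall>e. c e - c' e =
      (\<Sum>Q\<in>faces S. cf Q * cycle_chain (FQ_edges (quad S Q)) e) + (\<Sum>v\<in>verts S. cv v * cycle_chain (Fv_edges S v) e)"
    using assms(1) unfolding homologous_def by blast
  then have "(\<lambda>e. c e - c' e) = (\<lambda>e.
      (\<Sum>Q\<in>faces S. cf Q * cycle_chain (FQ_edges (quad S Q)) e) + (\<Sum>v\<in>verts S. cv v * cycle_chain (Fv_edges S v) e))"
    by blast
  then have "black_integral S \<theta> c - black_integral S \<theta> c' =
      (\<Sum>Q\<in>faces S. of_int (cf Q) * black_integral S \<theta> (cycle_chain (FQ_edges (quad S Q)))) +
      (\<Sum>v\<in>verts S. of_int (cv v) * black_integral S \<theta> (cycle_chain (Fv_edges S v)))"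
    by (simp only: black_integral_diff[symmetric] black_integral_add black_integral_lincomb)
  also have "\<dots> = 0" using closed by (simp add: black_integral_cycle_FQ black_integral_cycle_Fv)
  finally show ?thesis by simp
qed

lemma white_integral_homologous:
  assumes "homologous S c c'" and closed: "\<forall>v\<in>verts S. white_circulation S \<kappa> v = 0"
  shows "white_integral S \<kappa> c = white_integral S \<kappa> c'"
proof -
  obtain cf cv where "\<forall>e. c e - c' e =
      (\<Sum>Q\<in>faces S. cf Q * cycle_chain (FQ_edges (quad S Q)) e) + (\<Sum>v\<in>verts S. cv v * cycle_chain (Fv_edges S v) e)"
    using assms(1) unfolding homologous_def by blast
  then have "(\<lambda>e. c e - c' e) = (\<lambda>e.
      (\<Sum>Q\<in>faces S. cf Q * cycle_chain (FQ_edges (quad S Q)) e) + (\<Sum>v\<in>verts S. cv v * cycle_chain (Fv_edges S v) e))"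
    by blast
  then have "white_integral S \<kappa> c - white_integral S \<kappa> c' =
      (\<Sum>Q\<in>faces S. of_int (cf Q) * white_integral S \<kappa> (cycle_chain (FQ_edges (quad S Q)))) +
      (\<Sum>v\<in>verts S. of_int (cv v) * white_integral S \<kappa> (cycle_chain (Fv_edges S v)))"
    by (simp only: white_integral_diff[symmetric] white_integral_add white_integral_lincomb)
  also have "\<dots> = 0" using closed by (simp add: white_integral_cycle_FQ white_integral_cycle_Fv)
  finally show ?thesis by simp
qed

end

section \<open>Holomorphic differentials\<close>

definition white_coeff :: "('v, 'f) drs \<Rightarrow> ('f \<Rightarrow> complex) \<Rightarrow> 'f \<Rightarrow> complex" where
  "white_coeff S \<theta> Q = \<i> * rho S Q * \<theta> Q"

definition holo_form :: "('v, 'f) drs \<Rightarrow> ('f \<Rightarrow> complex) \<Rightarrow> 'v set \<times> 'v set \<Rightarrow> complex" where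
  "holo_form S \<theta> e = black_form S \<theta> e + white_form S (white_coeff S \<theta>) e"

definition locally_holomorphic :: "('v, 'f) drs \<Rightarrow> ('v set \<times> 'v set \<Rightarrow> complex) \<Rightarrow> bool" where
  "locally_holomorphic S \<omega> \<longleftrightarrow> (\<forall>Q\<in>faces S. \<exists>f. disc_holomorphic_on (rho S Q) (quad S Q) f \<and>
     (\<forall>(u, v, w)\<in>triples (quad S Q). \<omega> ({u, v}, {v, w}) = (f w - f u) / 2))"

definition holo_coeff :: "('v, 'f) drs \<Rightarrow> ('f \<Rightarrow> complex) \<Rightarrow> bool" where
  "holo_coeff S \<theta> \<longleftrightarrow>
     (\<forall>v\<in>verts S. black_circulation S \<theta> v = 0 \<and> white_circulation S (white_coeff S \<theta>) v = 0)"

definition black_value :: "('v, 'f) drs \<Rightarrow> ('v set \<times> 'v set \<Rightarrow> complex) \<Rightarrow> 'f \<Rightarrow> complex" where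
  "black_value S \<omega> Q = \<omega> (medial_edge (corner_wm (quad S Q)))"

definition black_period :: "('v, 'f) drs \<Rightarrow> ('v set \<times> 'v set \<Rightarrow> complex) \<Rightarrow> ('v set \<times> 'v set \<Rightarrow> int) \<Rightarrow> complex" where
  "black_period S \<omega> c = 2 * black_integral S (black_value S \<omega>) c"

definition white_period :: "('v, 'f) drs \<Rightarrow> ('v set \<times> 'v set \<Rightarrow> complex) \<Rightarrow> ('v set \<times> 'v set \<Rightarrow> int) \<Rightarrow> complex" where
  "white_period S \<omega> c = 2 * white_integral S (white_coeff S (black_value S \<omega>)) c"

lemma holo_form_cong: "(\<And>Q. Q \<in> faces S \<Longrightarrow> \<theta> Q = \<theta>' Q) \<Longrightarrow> holo_form S \<theta> = holo_form S \<theta>'"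
  unfolding holo_form_def black_form_def white_form_def white_coeff_def by (intro ext) (simp cong: sum.cong)

lemma white_coeff_diff: "white_coeff S (\<lambda>Q. \<theta> Q - \<theta>' Q) = (\<lambda>Q. white_coeff S \<theta> Q - white_coeff S \<theta>' Q)"
  unfolding white_coeff_def by (simp add: fun_eq_iff algebra_simps)

lemma holo_coeff_diff: "holo_coeff S \<theta> \<Longrightarrow> holo_coeff S \<theta>' \<Longrightarrow> holo_coeff S (\<lambda>Q. \<theta> Q - \<theta>' Q)"
  unfolding holo_coeff_def white_coeff_diff by (simp add: black_circulation_diff white_circulation_diff)

lemma black_period_diff: "black_period S \<omega> (\<lambda>e. c e - c' e) = black_period S \<omega> c - black_period S \<omega> c'"
  by (simp add: black_period_def black_integral_diff algebra_simps)

lemma white_period_diff: "white_period S \<omega> (\<lambda>e. c e - c' e) = white_period S \<omega> c - white_period S \<omega> c'"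
  by (simp add: white_period_def white_integral_diff algebra_simps)

lemma black_period_lincomb:
  "black_period S \<omega> (\<lambda>e. \<Sum>i\<in>I. m i * c i e) = (\<Sum>i\<in>I. of_int (m i) * black_period S \<omega> (c i))"
  by (simp add: black_period_def black_integral_lincomb sum_distrib_left algebra_simps)

lemma white_period_lincomb:
  "white_period S \<omega> (\<lambda>e. \<Sum>i\<in>I. m i * c i e) = (\<Sum>i\<in>I. of_int (m i) * white_period S \<omega> (c i))"
  by (simp add: white_period_def white_integral_lincomb sum_distrib_left algebra_simps)

context discrete_surface
begin

lemma holo_form_one_form: "one_form S (holo_form S \<theta>)"
  using black_white_one_form unfolding holo_form_def[abs_def] .

lemma holo_form_corners:
  assumes "Q \<in> faces S"
  shows "holo_form S \<theta> (medial_edge (corner_wm (quad S Q))) = \<theta> Q"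
    "holo_form S \<theta> (medial_edge (corner_bp (quad S Q))) = white_coeff S \<theta> Q"
    "holo_form S \<theta> (medial_edge (corner_wp (quad S Q))) = - \<theta> Q"
    "holo_form S \<theta> (medial_edge (corner_bm (quad S Q))) = - white_coeff S \<theta> Q"
  using assms by (simp_all add: holo_form_def black_form_corners white_form_corners)

lemma holo_form_locally_holomorphic: "locally_holomorphic S (holo_form S \<theta>)"
  unfolding locally_holomorphic_def
proof
  fix Q assume Q: "Q \<in> faces S"
  define f where "f x = (if x = bp (quad S Q) then 2 * \<theta> Q
    else if x = wp (quad S Q) then 2 * white_coeff S \<theta> Q else 0)" for x
  have "disc_holomorphic_on (rho S Q) (quad S Q) f"
    unfolding disc_holomorphic_on_def f_def white_coeff_def using face_distinct[OF Q] by auto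
  moreover have "\<forall>(u, v, w)\<in>triples (quad S Q). holo_form S \<theta> ({u, v}, {v, w}) = (f w - f u) / 2"
  proof clarify
    fix u v w assume "(u, v, w) \<in> triples (quad S Q)"
    then have "(u, v, w) \<in> {corner_wm (quad S Q), corner_bp (quad S Q), corner_wp (quad S Q), corner_bm (quad S Q)}"
      by (simp add: triples_corners)
    moreover have "f (bp (quad S Q)) = 2 * \<theta> Q" "f (wp (quad S Q)) = 2 * white_coeff S \<theta> Q"
      "f (bm (quad S Q)) = 0" "f (wm (quad S Q)) = 0"
      using face_distinct[OF Q] by (auto simp: f_def)
    ultimately show "holo_form S \<theta> ({u, v}, {v, w}) = (f w - f u) / 2"
      using holo_form_corners[OF Q, unfolded corner_defs medial_edge_def] by (auto simp: corner_defs)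
  qed
  ultimately show "\<exists>f. disc_holomorphic_on (rho S Q) (quad S Q) f \<and>
      (\<forall>(u, v, w)\<in>triples (quad S Q). holo_form S \<theta> ({u, v}, {v, w}) = (f w - f u) / 2)"
    by blast
qed

lemma locally_holomorphic_eq_holo_form:
  assumes one: "one_form S \<omega>" and loc: "locally_holomorphic S \<omega>"
  shows "\<omega> = holo_form S (black_value S \<omega>)"
proof (rule one_form_eqI[OF one holo_form_one_form])
  fix Q t assume Q: "Q \<in> faces S" and t: "t \<in> triples (quad S Q)"
  let ?q = "quad S Q" and ?\<theta> = "black_value S \<omega>"
  obtain f where hol: "disc_holomorphic_on (rho S Q) ?q f"
    and df: "\<forall>(u, v, w)\<in>triples ?q. \<omega> ({u, v}, {v, w}) = (f w - f u) / 2"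
    using loc Q unfolding locally_holomorphic_def by blast
  have df': "\<omega> (medial_edge s) = (f (snd (snd s)) - f (fst s)) / 2" if "s \<in> triples ?q" for s
    using df that by (cases s) (auto simp: medial_edge_def)
  have \<theta>: "?\<theta> Q = (f (bp ?q) - f (bm ?q)) / 2"
    using df'[OF corners_in_triples(1)] by (simp add: black_value_def corner_defs)
  have h: "f (wp ?q) - f (wm ?q) = \<i> * rho S Q * (f (bp ?q) - f (bm ?q))"
    using hol by (simp add: disc_holomorphic_on_def)
  have "\<omega> (medial_edge (corner_bp ?q)) = (f (wp ?q) - f (wm ?q)) / 2"
    using df'[OF corners_in_triples(2)] by (simp add: corner_defs)
  also have "\<dots> = white_coeff S ?\<theta> Q" unfolding h \<theta> white_coeff_def by simp
  finally have bp: "\<omega> (medial_edge (corner_bp ?q)) = white_coeff S ?\<theta> Q" .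
  have "\<omega> (medial_edge (corner_wp ?q)) = - ((f (bp ?q) - f (bm ?q)) / 2)"
    using df'[OF corners_in_triples(3)] by (simp add: corner_defs field_simps)
  then have wp: "\<omega> (medial_edge (corner_wp ?q)) = - ?\<theta> Q" unfolding \<theta> .
  have "\<omega> (medial_edge (corner_bm ?q)) = - ((f (wp ?q) - f (wm ?q)) / 2)"
    using df'[OF corners_in_triples(4)] by (simp add: corner_defs field_simps)
  also have "\<dots> = - white_coeff S ?\<theta> Q" unfolding h \<theta> white_coeff_def by simp
  finally have bm: "\<omega> (medial_edge (corner_bm ?q)) = - white_coeff S ?\<theta> Q" .
  show "\<omega> (medial_edge t) = holo_form S ?\<theta> (medial_edge t)"
    using t bp wp bm holo_form_corners[OF Q] unfolding triples_corners by (auto simp: black_value_def)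
qed

lemma holo_diff_iff_local:
  "holo_diff S \<omega> \<longleftrightarrow>
     one_form S \<omega> \<and> locally_holomorphic S \<omega> \<and> (\<forall>v\<in>verts S. (\<Sum>e\<in>Fv_edges S v. \<omega> e) = 0)"
proof
  assume "holo_diff S \<omega>"
  then show "one_form S \<omega> \<and> locally_holomorphic S \<omega> \<and> (\<forall>v\<in>verts S. (\<Sum>e\<in>Fv_edges S v. \<omega> e) = 0)"
    by (simp add: holo_diff_def locally_holomorphic_def closed_form_def)
next
  assume asm: "one_form S \<omega> \<and> locally_holomorphic S \<omega> \<and> (\<forall>v\<in>verts S. (\<Sum>e\<in>Fv_edges S v. \<omega> e) = 0)"
  then have eq: "\<omega> = holo_form S (black_value S \<omega>)"
    using locally_holomorphic_eq_holo_form by blast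
  have "type_diamond S \<omega>"
    unfolding type_diamond_def Let_def
  proof
    fix Q assume Q: "Q \<in> faces S"
    have "({bm (quad S Q), wp (quad S Q)}, {wp (quad S Q), bp (quad S Q)}) = prod.swap (medial_edge (corner_wp (quad S Q)))"
      "({wm (quad S Q), bm (quad S Q)}, {bm (quad S Q), wp (quad S Q)}) = prod.swap (medial_edge (corner_bm (quad S Q)))"
      "({bm (quad S Q), wm (quad S Q)}, {wm (quad S Q), bp (quad S Q)}) = medial_edge (corner_wm (quad S Q))"
      "({wm (quad S Q), bp (quad S Q)}, {bp (quad S Q), wp (quad S Q)}) = medial_edge (corner_bp (quad S Q))"
      by (auto simp: medial_edge_def corner_defs)
    then show "\<omega> ({bm (quad S Q), wm (quad S Q)}, {wm (quad S Q), bp (quad S Q)}) =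
          \<omega> ({bm (quad S Q), wp (quad S Q)}, {wp (quad S Q), bp (quad S Q)}) \<and>
          \<omega> ({wm (quad S Q), bm (quad S Q)}, {bm (quad S Q), wp (quad S Q)}) =
          \<omega> ({wm (quad S Q), bp (quad S Q)}, {bp (quad S Q), wp (quad S Q)})"
      by (subst (1 2 3 4) eq) (simp add: holo_form_def black_form_swap white_form_swap
          black_form_corners[OF Q] white_form_corners[OF Q])
  qed
  moreover have "(\<Sum>e\<in>FQ_edges (quad S Q). \<omega> e) = 0" if "Q \<in> faces S" for Q
    by (subst eq) (simp add: sum_FQ_edges holo_form_corners that)
  ultimately show "holo_diff S \<omega>"
    using asm by (simp add: holo_diff_def closed_form_def locally_holomorphic_def)
qed

lemma holo_diff_holo_form_iff: "holo_diff S (holo_form S \<theta>) \<longleftrightarrow> holo_coeff S \<theta>"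
proof -
  have "(\<Sum>e\<in>Fv_edges S v. holo_form S \<theta> e) = 0 \<longleftrightarrow>
      black_circulation S \<theta> v = 0 \<and> white_circulation S (white_coeff S \<theta>) v = 0" for v
    using black_circulation_black[of v \<theta>] white_circulation_white[of v "white_coeff S \<theta>"]
    by (cases "blk S v") (simp_all add: holo_form_def sum.distrib sum_Fv_black_form sum_Fv_white_form)
  then show ?thesis
    by (simp add: holo_diff_iff_local holo_form_one_form holo_form_locally_holomorphic holo_coeff_def)
qed

lemma holo_diff_eq_holo_form:
  assumes "holo_diff S \<omega>"
  shows "\<omega> = holo_form S (black_value S \<omega>)" and "holo_coeff S (black_value S \<omega>)"
proof -
  show eq: "\<omega> = holo_form S (black_value S \<omega>)"
    using assms locally_holomorphic_eq_holo_form holo_diff_iff_local by blast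
  show "holo_coeff S (black_value S \<omega>)"
    using assms unfolding holo_diff_holo_form_iff[symmetric] eq[symmetric] .
qed

lemma bper_holo_form: "bper S (holo_form S \<theta>) xs = 2 * black_integral S \<theta> (pchain xs)"
  unfolding bper_def holo_form_def[abs_def] sum_list_addf sum_list_black_form sum_list_white_form
    pchain_eq_chain_of
  by (simp add: black_integral_def white_integral_def counts_filter_colors)

lemma wper_holo_form: "wper S (holo_form S \<theta>) xs = 2 * white_integral S (white_coeff S \<theta>) (pchain xs)"
  unfolding wper_def holo_form_def[abs_def] sum_list_addf sum_list_black_form sum_list_white_form
    pchain_eq_chain_of
  by (simp add: black_integral_def white_integral_def counts_filter_colors)

lemma bper_eq_black_period: "holo_diff S \<omega> \<Longrightarrow> bper S \<omega> xs = black_period S \<omega> (pchain xs)"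
  using bper_holo_form holo_diff_eq_holo_form(1) black_period_def by metis

lemma wper_eq_white_period: "holo_diff S \<omega> \<Longrightarrow> wper S \<omega> xs = white_period S \<omega> (pchain xs)"
  using wper_holo_form holo_diff_eq_holo_form(1) white_period_def by metis

lemma periods_homologous:
  assumes "holo_diff S \<omega>" "homologous S c c'"
  shows "black_period S \<omega> c = black_period S \<omega> c'" "white_period S \<omega> c = white_period S \<omega> c'"
  using holo_diff_eq_holo_form(2)[OF assms(1)] assms(2)
  by (simp_all add: holo_coeff_def black_period_def white_period_def
      black_integral_homologous white_integral_homologous)

end

section \<open>Uniqueness: the discrete Riemann bilinear relation\<close>

context discrete_surface
begin

lemma white_form_potential:
  assumes periods: "\<forall>c. closed_Xpath S c \<longrightarrow> white_integral S \<zeta> (pchain c) = 0"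
  obtains Pot where "\<And>x y. (x, y) \<in> Xedges S \<Longrightarrow> Pot y - Pot x = white_form S \<zeta> (x, y)"
proof -
  obtain Q0 where Q0: "Q0 \<in> faces S" using faces_nonempty by blast
  define x0 where "x0 = {bm (quad S Q0), wm (quad S Q0)}"
  let ?R = "\<lambda>x. (x0, x) \<in> (Xedges S)\<^sup>*"
  have reach: "?R {u, z}" if "z \<in> nbrs S u" for u z
    unfolding x0_def
    using Xedges_connected triple_nbrs[OF Q0 corners_in_triples(4)[of "quad S Q0", unfolded corner_bm_def]] that
    by blast
  have endpoints: "?R x \<and> ?R y" if xy: "(x, y) \<in> Xedges S" for x y
  proof -
    obtain u v w Q where "x = {u, v}" "y = {v, w}" "Q \<in> faces S"
      "(u, v, w) \<in> triples (quad S Q) \<or> (w, v, u) \<in> triples (quad S Q)"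
      using xy unfolding Xedges_def by blast
    then show ?thesis using reach triple_nbrs by (metis insert_commute)
  qed
  define P where "P x = (SOME p. p \<noteq> [] \<and> hd p = x0 \<and> last p = x \<and> set (pedges p) \<subseteq> Xedges S)" for x
  have P: "P x \<noteq> [] \<and> hd (P x) = x0 \<and> last (P x) = x \<and> set (pedges (P x)) \<subseteq> Xedges S" if "?R x" for x
    unfolding P_def by (rule someI_ex) (rule rtrancl_Xedges_path[OF that])
  define Pot where "Pot x = sum_list (map (white_form S \<zeta>) (pedges (P x)))" for x
  have "Pot y - Pot x = white_form S \<zeta> (x, y)" if xy: "(x, y) \<in> Xedges S" for x y
  proof -
    define c where "c = P x @ rev (P y)"
    note Px = P[OF endpoints[OF xy, THEN conjunct1]] and Py = P[OF endpoints[OF xy, THEN conjunct2]]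
    have pe: "pedges c = pedges (P x) @ [(x, y)] @ rev (map prod.swap (pedges (P y)))"
      unfolding c_def using Px Py by (simp add: pedges_append pedges_rev hd_rev)
    have "closed_Xpath S c"
      unfolding closed_Xpath_def
    proof (intro conjI)
      show "2 \<le> length c" using Px Py by (cases "P x"; cases "P y") (auto simp: c_def)
      show "hd c = last c" using Px Py by (simp add: c_def hd_append last_rev)
      show "set (pedges c) \<subseteq> Xedges S" unfolding pe using Px Py xy swap_in_Xedges by auto
    qed
    then have "0 = sum_list (map (white_form S \<zeta>) (pedges c))"
      using periods by (simp add: sum_list_white_form pchain_eq_chain_of)
    also have "\<dots> = Pot x + white_form S \<zeta> (x, y) - Pot y"
      unfolding pe Pot_def by (simp add: sum_list_rev_swap white_form_swap)
    finally show ?thesis by (simp add: algebra_simps)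
  qed
  then show thesis using that by blast
qed

text \<open>The potential is constant around each white vertex, since the edges of the cycle around
  a white vertex are black.\<close>
lemma white_form_exact:
  assumes periods: "\<forall>c. closed_Xpath S c \<longrightarrow> white_integral S \<zeta> (pchain c) = 0"
  obtains G where "\<forall>Q\<in>faces S. \<zeta> Q = G (wp (quad S Q)) - G (wm (quad S Q))"
proof -
  obtain Pot where Pot: "\<And>x y. (x, y) \<in> Xedges S \<Longrightarrow> Pot y - Pot x = white_form S \<zeta> (x, y)"
    using white_form_potential[OF periods] by blast
  have const: "Pot {u, w} = Pot {u', w}"
    if w: "\<not> blk S w" "w \<in> verts S" and u: "u \<in> nbrs S w" and u': "u' \<in> nbrs S w" for w u u'
  proof -
    have "(u, u') \<in> (link_rel S w)\<^sup>*" using link_connected w u u' by blast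
    then show ?thesis
    proof (induction rule: rtrancl_induct)
      case (step p s)
      obtain Q where Q: "Q \<in> faces S" and t: "(p, w, s) \<in> triples (quad S Q)"
        using step.hyps(2) unfolding link_rel_def by blast
      have "(p, w, s) = corner_wm (quad S Q) \<or> (p, w, s) = corner_wp (quad S Q)"
        using t w face_colors[OF Q] by (auto simp: triples_corners corner_defs)
      then have "white_form S \<zeta> (medial_edge (p, w, s)) = 0"
        using white_form_corners[OF Q] by auto
      moreover have "Pot {s, w} - Pot {p, w} = white_form S \<zeta> (medial_edge (p, w, s))"
        using Pot medial_edge_in_Xedges(1)[OF Q t] by (simp add: medial_edge_def insert_commute)
      ultimately show ?case using step.IH by simp
    qed simp
  qed
  define G where "G w = Pot {SOME u. u \<in> nbrs S w, w}" for w
  have G: "Pot {u, w} = G w" if "\<not> blk S w" "u \<in> nbrs S w" for u w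
  proof -
    have "w \<in> verts S"
      using that unfolding nbrs_def lam_edges_def verts_eq quad_edges_def qverts_def cyc_def by auto
    moreover have "(SOME u. u \<in> nbrs S w) \<in> nbrs S w" using that by (metis someI_ex)
    ultimately show ?thesis unfolding G_def using const that by blast
  qed
  have "\<zeta> Q = G (wp (quad S Q)) - G (wm (quad S Q))" if Q: "Q \<in> faces S" for Q
  proof -
    let ?q = "quad S Q"
    have n: "bp ?q \<in> nbrs S (wp ?q)" "bp ?q \<in> nbrs S (wm ?q)"
      using triple_nbrs[OF Q corners_in_triples(2)[of ?q, unfolded corner_bp_def]]
      by (auto simp: nbrs_def insert_commute)
    have "\<zeta> Q = white_form S \<zeta> (medial_edge (corner_bp ?q))" using white_form_corners[OF Q] by simp
    also have "\<dots> = Pot {bp ?q, wp ?q} - Pot {wm ?q, bp ?q}"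
      using Pot medial_edge_in_Xedges(1)[OF Q corners_in_triples(2)]
      by (simp add: medial_edge_def corner_bp_def)
    also have "\<dots> = G (wp ?q) - G (wm ?q)"
      using G[OF _ n(1)] G[OF _ n(2)] face_colors[OF Q] by (simp add: insert_commute)
    finally show ?thesis .
  qed
  then show thesis using that by blast
qed

lemma sum_pairing_exact:
  assumes exact: "\<forall>Q\<in>faces S. \<zeta> Q = G (wp (quad S Q)) - G (wm (quad S Q))"
    and closed: "\<forall>v\<in>verts S. black_circulation S \<theta> v = 0"
  shows "(\<Sum>Q\<in>faces S. \<theta> Q * \<zeta> Q) = 0"
proof -
  have inner: "(\<Sum>v\<in>verts S. G v * (\<theta> Q * ((if wm (quad S Q) = v then 1 else 0) - (if wp (quad S Q) = v then 1 else 0))))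
      = - (\<theta> Q * \<zeta> Q)" if Q: "Q \<in> faces S" for Q
  proof -
    have "(\<Sum>v\<in>verts S. G v * (\<theta> Q * ((if wm (quad S Q) = v then 1 else 0) - (if wp (quad S Q) = v then 1 else 0))))
        = (\<Sum>v\<in>verts S. (if wm (quad S Q) = v then \<theta> Q * G v else 0) - (if wp (quad S Q) = v then \<theta> Q * G v else 0))"
      by (intro sum.cong refl) (simp add: algebra_simps)
    also have "\<dots> = \<theta> Q * G (wm (quad S Q)) - \<theta> Q * G (wp (quad S Q))"
      using face_verts[OF Q] finite_verts by (simp add: sum_subtractf sum.delta')
    also have "\<dots> = - (\<theta> Q * \<zeta> Q)" using exact Q by (simp add: right_diff_distrib)
    finally show ?thesis .
  qed
  have "0 = (\<Sum>v\<in>verts S. G v * black_circulation S \<theta> v)" using closed by simp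
  also have "\<dots> = (\<Sum>Q\<in>faces S. \<Sum>v\<in>verts S.
      G v * (\<theta> Q * ((if wm (quad S Q) = v then 1 else 0) - (if wp (quad S Q) = v then 1 else 0))))"
    unfolding black_circulation_def sum_distrib_left by (rule sum.swap)
  also have "\<dots> = - (\<Sum>Q\<in>faces S. \<theta> Q * \<zeta> Q)"
    using inner by (simp add: sum_negf)
  finally show ?thesis by simp
qed

text \<open>At a black vertex \<open>b\<close> the circulation is the integral along the path of the exact form
  whose potential is the indicator of \<open>b\<close>.\<close>
lemma white_circulation_Bcount:
  assumes closed: "closed_Xpath S xs"
  shows "white_circulation S (\<lambda>Q. of_int (Bcount xs (quad S Q))) v = 0"
proof (cases "blk S v")
  case black: True
  define F :: "'v set \<Rightarrow> complex" where "F x = (if v \<in> x then 1 else 0)" for x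
  define cb :: "'f \<Rightarrow> complex" where "cb Q = (if bp (quad S Q) = v then 1 else 0) - (if bm (quad S Q) = v then 1 else 0)" for Q
  have corner: "F (snd (medial_edge t)) - F (fst (medial_edge t)) = black_form S cb (medial_edge t)"
    if Q: "Q \<in> faces S" and t: "t \<in> triples (quad S Q)" for Q t
  proof -
    have "v \<noteq> wm (quad S Q)" "v \<noteq> wp (quad S Q)" using black face_colors[OF Q] by auto
    moreover have "t = corner_wm (quad S Q) \<or> t = corner_bp (quad S Q) \<or> t = corner_wp (quad S Q) \<or> t = corner_bm (quad S Q)"
      using t by (simp add: triples_corners)
    ultimately show ?thesis
      by (elim disjE; hypsubst; simp only: black_form_corners[OF Q])
        (auto simp: F_def cb_def medial_edge_def corner_defs)
  qed
  have telescope: "F (snd e) - F (fst e) = black_form S cb e" if e: "e \<in> Xedges S" for e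
  proof -
    obtain Q t where Q: "Q \<in> faces S" and t: "t \<in> triples (quad S Q)"
      and "e = medial_edge t \<or> e = prod.swap (medial_edge t)"
      using e unfolding Xedges_iff by blast
    then show ?thesis using corner[OF Q t] black_form_swap by (metis fst_swap snd_swap minus_diff_eq)
  qed
  have "xs \<noteq> []" using closed by (auto simp: closed_Xpath_def)
  then have "0 = sum_list (map (\<lambda>e. F (snd e) - F (fst e)) (pedges xs))"
    using sum_list_pedges_telescope[of xs F] closed by (simp add: closed_Xpath_def)
  also have "\<dots> = sum_list (map (black_form S cb) (pedges xs))"
    using closed telescope by (intro arg_cong[where f = sum_list] map_cong) (auto simp: closed_Xpath_def)
  also have "\<dots> = white_circulation S (\<lambda>Q. of_int (Bcount xs (quad S Q))) v"
    by (simp add: sum_list_black_form pchain_eq_chain_of[symmetric] black_integral_eq_sum_Bcount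
        white_circulation_def cb_def mult.commute)
  finally show ?thesis by simp
qed (rule white_circulation_white)

lemma Re_i_mult_cnj_white_coeff: "Re (\<i> * (\<theta> Q * cnj (white_coeff S \<theta> Q))) = Re (rho S Q) * (cmod (\<theta> Q))\<^sup>2"
  unfolding white_coeff_def cmod_power2 by (simp add: algebra_simps power2_eq_square)

lemma coeff_eq_0_if_energy_eq_0:
  assumes "(\<Sum>Q\<in>faces S. \<theta> Q * cnj (white_coeff S \<theta> Q)) = 0"
  shows "\<forall>Q\<in>faces S. \<theta> Q = 0"
proof -
  have "(\<Sum>Q\<in>faces S. Re (rho S Q) * (cmod (\<theta> Q))\<^sup>2) = Re (\<i> * (\<Sum>Q\<in>faces S. \<theta> Q * cnj (white_coeff S \<theta> Q)))"
    by (simp only: sum_distrib_left Re_sum Re_i_mult_cnj_white_coeff)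
  also have "\<dots> = 0" using assms by simp
  finally have sum0: "(\<Sum>Q\<in>faces S. Re (rho S Q) * (cmod (\<theta> Q))\<^sup>2) = 0" .
  have nonneg: "0 \<le> Re (rho S Q) * (cmod (\<theta> Q))\<^sup>2" if "Q \<in> faces S" for Q
    using Re_rho_pos[OF that] by simp
  have zero: "\<forall>Q\<in>faces S. Re (rho S Q) * (cmod (\<theta> Q))\<^sup>2 = 0"
    using sum_nonneg_eq_0_iff[OF finite_faces, of "\<lambda>Q. Re (rho S Q) * (cmod (\<theta> Q))\<^sup>2"] nonneg sum0
    by blast
  show ?thesis
  proof
    fix Q assume Q: "Q \<in> faces S"
    show "\<theta> Q = 0" using bspec[OF zero Q] Re_rho_pos[OF Q] by simp
  qed
qed

lemma white_integral_eq_0_if_basis_periods_eq_0: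
  assumes SB: "symplectic_basis S g \<alpha> \<beta>" and closed: "\<forall>v\<in>verts S. white_circulation S \<zeta> v = 0"
    and periods: "\<forall>i<g. white_integral S \<zeta> (pchain (\<alpha> i)) = 0 \<and> white_integral S \<zeta> (pchain (\<beta> i)) = 0"
    and c: "closed_Xpath S c"
  shows "white_integral S \<zeta> (pchain c) = 0"
proof -
  obtain m n where "homologous S (pchain c) (\<lambda>e. \<Sum>i<g. m i * pchain (\<alpha> i) e + n i * pchain (\<beta> i) e)"
    using SB c unfolding symplectic_basis_def by blast
  then have "white_integral S \<zeta> (pchain c) =
      white_integral S \<zeta> (\<lambda>e. (\<Sum>i<g. m i * pchain (\<alpha> i) e) + (\<Sum>i<g. n i * pchain (\<beta> i) e))"
    using white_integral_homologous closed by (simp add: sum.distrib)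
  also have "\<dots> = 0" using periods by (simp add: white_integral_add white_integral_lincomb)
  finally show ?thesis .
qed

text \<open>The discrete Riemann bilinear argument: the white coefficient \<open>\<zeta>\<close> of the conjugate form,
  corrected by the forms dual to the \<open>a\<close>-cycles, has vanishing periods, hence is exact, so its
  pairing with \<open>\<theta>\<close> vanishes; but this pairing is the Dirichlet energy of \<open>\<theta>\<close>.\<close>
lemma holo_coeff_eq_0_if_a_periods_eq_0:
  assumes SB: "symplectic_basis S g \<alpha> \<beta>" and hol: "holo_coeff S \<theta>"
    and zero: "\<forall>j<g. black_integral S \<theta> (pchain (\<alpha> j)) = 0 \<and>
                     white_integral S (white_coeff S \<theta>) (pchain (\<alpha> j)) = 0"
  shows "\<forall>Q\<in>faces S. \<theta> Q = 0"
proof -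
  let ?\<kappa> = "white_coeff S \<theta>"
  have closed: "closed_Xpath S (\<alpha> i)" "closed_Xpath S (\<beta> i)" if "i < g" for i
    using SB that by (auto simp: symplectic_basis_def)
  have int: "intersection S (\<alpha> i) (\<alpha> j) = 0" "intersection S (\<alpha> i) (\<beta> j) = (if i = j then 1 else 0)"
    if "i < g" "j < g" for i j
    using SB that unfolding symplectic_basis_def by auto
  define B where "B i = white_integral S ?\<kappa> (pchain (\<beta> i))" for i
  define Bc where "Bc i Q = complex_of_int (Bcount (\<alpha> i) (quad S Q))" for i Q
  define \<zeta> where "\<zeta> Q = cnj (?\<kappa> Q) - (\<Sum>i<g. cnj (B i) * Bc i Q)" for Q
  have \<zeta>_closed: "\<forall>v\<in>verts S. white_circulation S \<zeta> v = 0"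
  proof
    fix v assume v: "v \<in> verts S"
    have "(\<Sum>i<g. cnj (B i) * white_circulation S (Bc i) v) = 0"
      using closed(1) by (intro sum.neutral) (simp add: Bc_def[abs_def] white_circulation_Bcount)
    then show "white_circulation S \<zeta> v = 0"
      using hol v unfolding \<zeta>_def white_circulation_coeff_lincomb white_circulation_cnj holo_coeff_def
      by simp
  qed
  have \<zeta>_integral: "white_integral S \<zeta> x =
      cnj (white_integral S ?\<kappa> x) - (\<Sum>i<g. cnj (B i) * white_integral S (Bc i) x)" for x
    unfolding \<zeta>_def white_integral_coeff_lincomb white_integral_cnj ..
  have \<zeta>\<alpha>: "white_integral S \<zeta> (pchain (\<alpha> j)) = 0" if "j < g" for j
    using zero that int(1)[OF _ that] by (simp add: \<zeta>_integral Bc_def[abs_def] white_integral_Bcount)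
  have \<zeta>\<beta>: "white_integral S \<zeta> (pchain (\<beta> j)) = 0" if "j < g" for j
  proof -
    have "(\<Sum>i<g. cnj (B i) * white_integral S (Bc i) (pchain (\<beta> j))) = (\<Sum>i<g. if i = j then cnj (B i) else 0)"
      using int(2)[OF _ that] by (intro sum.cong refl) (simp add: Bc_def[abs_def] white_integral_Bcount)
    then show ?thesis using that by (simp add: \<zeta>_integral B_def)
  qed
  have "\<forall>c. closed_Xpath S c \<longrightarrow> white_integral S \<zeta> (pchain c) = 0"
    using white_integral_eq_0_if_basis_periods_eq_0[OF SB \<zeta>_closed] \<zeta>\<alpha> \<zeta>\<beta> by blast
  then obtain G where "\<forall>Q\<in>faces S. \<zeta> Q = G (wp (quad S Q)) - G (wm (quad S Q))"
    using white_form_exact by blast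
  then have "0 = (\<Sum>Q\<in>faces S. \<zeta> Q * \<theta> Q)"
    using sum_pairing_exact hol unfolding holo_coeff_def by (simp add: mult.commute)
  also have "\<dots> = (\<Sum>Q\<in>faces S. cnj (?\<kappa> Q) * \<theta> Q) - (\<Sum>i<g. cnj (B i) * (\<Sum>Q\<in>faces S. Bc i Q * \<theta> Q))"
    unfolding \<zeta>_def by (rule sum_coeff_lincomb)
  also have "(\<Sum>i<g. cnj (B i) * (\<Sum>Q\<in>faces S. Bc i Q * \<theta> Q)) = 0"
    using zero by (simp add: Bc_def black_integral_eq_sum_Bcount mult.commute)
  finally show ?thesis
    by (intro coeff_eq_0_if_energy_eq_0) (simp add: mult.commute)
qed

end

section \<open>Existence by counting dimensions\<close>

lemma all_less_three_blocks:
  fixes m k l :: nat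
  shows "(\<forall>r<m + k + l. F r) \<longleftrightarrow> (\<forall>r<m. F r) \<and> (\<forall>j<k. F (m + j)) \<and> (\<forall>j<l. F (m + k + j))"
proof
  assume blocks: "(\<forall>r<m. F r) \<and> (\<forall>j<k. F (m + j)) \<and> (\<forall>j<l. F (m + k + j))"
  show "\<forall>r<m + k + l. F r"
  proof (intro allI impI)
    fix r assume r: "r < m + k + l"
    show "F r"
    proof (cases "r < m")
      case False
      show ?thesis
      proof (cases "r < m + k")
        case True
        then show ?thesis using False blocks[THEN conjunct2, THEN conjunct1, rule_format, of "r - m"] by simp
      next
        case outer: False
        then show ?thesis using r blocks[THEN conjunct2, THEN conjunct2, rule_format, of "r - m - k"] by simp
      qed
    qed (use blocks in blast)
  qed
qed auto

context discrete_surface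
begin

lemma card_faces_containing_edge:
  assumes x: "x \<in> lam_edges S"
  shows "card {Q\<in>faces S. x \<in> quad_edges (quad S Q)} = 2"
proof -
  obtain Q1 a b where Q1: "Q1 \<in> faces S" and ab: "x = {a, b}" "(a, b) \<in> dedges (quad S Q1)"
    using x unfolding lam_edges_def quad_edges_def dedges_def by blast
  define A where "A = {Q\<in>faces S. (a, b) \<in> dedges (quad S Q)}"
  define B where "B = {Q\<in>faces S. (b, a) \<in> dedges (quad S Q)}"
  have "(a, b) \<in> adj_rel S" using Q1 ab by (auto simp: adj_rel_def)
  then have "card A = 1" "card B = 1"
    using surface unfolding A_def B_def discrete_riemann_surface_def by auto
  moreover have "{Q\<in>faces S. x \<in> quad_edges (quad S Q)} = A \<union> B"
    unfolding ab A_def B_def quad_edges_def dedges_def by (auto simp: doubleton_eq_iff)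
  moreover have "A \<inter> B = {}"
  proof -
    have "\<not> ((a, b) \<in> dedges (quad S Q) \<and> (b, a) \<in> dedges (quad S Q))" if "Q \<in> faces S" for Q
      using face_distinct[OF that] face_distinct[OF that, THEN not_sym] unfolding dedges_def by auto
    then show ?thesis unfolding A_def B_def by blast
  qed
  moreover have "finite A" "finite B" using finite_faces by (auto simp: A_def B_def)
  ultimately show ?thesis by (simp add: card_Un_disjoint)
qed

lemma card_lam_edges: "card (lam_edges S) = 2 * card (faces S)"
proof -
  let ?P = "SIGMA Q:faces S. quad_edges (quad S Q)"
  have "card ?P = (\<Sum>Q\<in>faces S. card (quad_edges (quad S Q)))"
    using finite_faces by (intro card_SigmaI) (auto simp: quad_edges_def)
  also have "\<dots> = 4 * card (faces S)"
  proof -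
    have "card (quad_edges (quad S Q)) = 4" if "Q \<in> faces S" for Q
      using face_distinct[OF that] face_distinct[OF that, THEN not_sym]
      unfolding quad_edges_def by (simp add: card_insert_if doubleton_eq_iff)
    then show ?thesis by simp
  qed
  finally have c1: "card ?P = 4 * card (faces S)" .
  let ?P' = "SIGMA x:lam_edges S. {Q\<in>faces S. x \<in> quad_edges (quad S Q)}"
  have "?P' = prod.swap ` ?P" unfolding lam_edges_def by auto
  then have "card ?P' = card ?P" by (simp add: card_image)
  moreover have "card ?P' = (\<Sum>x\<in>lam_edges S. card {Q\<in>faces S. x \<in> quad_edges (quad S Q)})"
    using finite_faces by (intro card_SigmaI) (auto simp: lam_edges_def quad_edges_def)
  moreover have "\<dots> = 2 * card (lam_edges S)" using card_faces_containing_edge by simp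
  ultimately show ?thesis using c1 by simp
qed

lemma card_faces:
  assumes Q0: "Q0 \<in> faces S"
  shows "card (faces S) = card (verts S - {bm (quad S Q0), wm (quad S Q0)}) + g + g"
proof -
  have sub: "{bm (quad S Q0), wm (quad S Q0)} \<subseteq> verts S" and "card {bm (quad S Q0), wm (quad S Q0)} = 2"
    using face_verts[OF Q0] face_distinct[OF Q0] by auto
  then have "card (verts S) = card (verts S - {bm (quad S Q0), wm (quad S Q0)}) + 2"
    using card_mono[OF finite_verts sub] by (simp add: card_Diff_subset)
  then show ?thesis using euler_characteristic card_lam_edges by linarith
qed

lemma sum_white_circulation_black: "(\<Sum>v\<in>{v\<in>verts S. blk S v}. white_circulation S \<kappa> v) = 0"
proof -
  have "(\<Sum>v\<in>{v\<in>verts S. blk S v}. white_circulation S \<kappa> v) = (\<Sum>Q\<in>faces S. \<Sum>v\<in>{v\<in>verts S. blk S v}.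
      (if bp (quad S Q) = v then \<kappa> Q else 0) - (if bm (quad S Q) = v then \<kappa> Q else 0))"
    unfolding white_circulation_def by (subst sum.swap) (intro sum.cong refl, simp add: algebra_simps)
  also have "\<dots> = 0"
    using face_colors face_verts finite_verts by (intro sum.neutral) (simp add: sum_subtractf sum.delta')
  finally show ?thesis .
qed

lemma sum_black_circulation_white: "(\<Sum>v\<in>{v\<in>verts S. \<not> blk S v}. black_circulation S \<theta> v) = 0"
proof -
  have "(\<Sum>v\<in>{v\<in>verts S. \<not> blk S v}. black_circulation S \<theta> v) = (\<Sum>Q\<in>faces S. \<Sum>v\<in>{v\<in>verts S. \<not> blk S v}.
      (if wm (quad S Q) = v then \<theta> Q else 0) - (if wp (quad S Q) = v then \<theta> Q else 0))"
    unfolding black_circulation_def by (subst sum.swap) (intro sum.cong refl, simp add: algebra_simps)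
  also have "\<dots> = 0"
    using face_colors face_verts finite_verts by (intro sum.neutral) (simp add: sum_subtractf sum.delta')
  finally show ?thesis .
qed

text \<open>Summed over all black (white) vertices the white (black) circulations cancel, so the
  conditions at one black and one white vertex follow from the others.\<close>
lemma holo_coeff_iff_off_face:
  assumes Q0: "Q0 \<in> faces S"
  shows "holo_coeff S \<theta> \<longleftrightarrow> (\<forall>v\<in>verts S - {bm (quad S Q0), wm (quad S Q0)}.
    black_circulation S \<theta> v + white_circulation S (white_coeff S \<theta>) v = 0)" (is "_ \<longleftrightarrow> ?off")
proof
  assume ?off
  then have off: "black_circulation S \<theta> v = 0 \<and> white_circulation S (white_coeff S \<theta>) v = 0"
    if "v \<in> verts S - {bm (quad S Q0), wm (quad S Q0)}" for v
  proof -
    have "black_circulation S \<theta> v + white_circulation S (white_coeff S \<theta>) v = 0"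
      using \<open>?off\<close> that by blast
    then show ?thesis
      using black_circulation_black[of v \<theta>] white_circulation_white[of v "white_coeff S \<theta>"]
      by (cases "blk S v") auto
  qed
  let ?b0 = "bm (quad S Q0)" and ?w0 = "wm (quad S Q0)"
  have b0: "blk S ?b0" "?b0 \<in> verts S" and w0: "\<not> blk S ?w0" "?w0 \<in> verts S"
    using face_colors[OF Q0] face_verts[OF Q0] by auto
  have white_b0: "white_circulation S (white_coeff S \<theta>) ?b0 = 0"
  proof -
    have "0 = (\<Sum>v\<in>{v\<in>verts S. blk S v}. white_circulation S (white_coeff S \<theta>) v)"
      by (simp add: sum_white_circulation_black)
    also have "\<dots> = white_circulation S (white_coeff S \<theta>) ?b0"
      using b0 w0 off finite_verts by (subst sum.remove[of _ ?b0]) (auto intro!: sum.neutral)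
    finally show ?thesis by simp
  qed
  have black_w0: "black_circulation S \<theta> ?w0 = 0"
  proof -
    have "0 = (\<Sum>v\<in>{v\<in>verts S. \<not> blk S v}. black_circulation S \<theta> v)"
      by (simp add: sum_black_circulation_white)
    also have "\<dots> = black_circulation S \<theta> ?w0"
      using b0 w0 off finite_verts by (subst sum.remove[of _ ?w0]) (auto intro!: sum.neutral)
    finally show ?thesis by simp
  qed
  show "holo_coeff S \<theta>"
    unfolding holo_coeff_def using off b0 w0 white_b0 black_w0 black_circulation_black white_circulation_white by blast
qed (simp add: holo_coeff_def)

text \<open>Closedness off one face together with prescribed \<open>a\<close>-periods is a square linear system
  for \<open>\<theta>\<close>: the \<open>V - 2\<close> vertex rows and \<open>2 g\<close> period rows match the \<open>F = V - 2 + 2 g\<close> faces.\<close>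
lemma holo_coeff_square_system:
  obtains K rhs where
    "\<And>\<theta> a b. (\<forall>r<card (faces S). (\<Sum>Q\<in>faces S. K r Q * \<theta> Q) = rhs a b r) \<longleftrightarrow>
      holo_coeff S \<theta> \<and> (\<forall>j<g. black_integral S \<theta> (pchain (\<alpha> j)) = a j \<and>
                              white_integral S (white_coeff S \<theta>) (pchain (\<alpha> j)) = b j)"
    and "\<And>r. rhs (\<lambda>_. 0) (\<lambda>_. 0) r = 0"
proof -
  obtain Q0 where Q0: "Q0 \<in> faces S" using faces_nonempty by blast
  define R where "R = verts S - {bm (quad S Q0), wm (quad S Q0)}"
  define m where "m = card R"
  have n: "card (faces S) = m + g + g" unfolding m_def R_def by (rule card_faces[OF Q0])
  obtain vr where vr: "bij_betw vr {..<m} R"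
    using ex_bij_betw_nat_finite[of R] finite_verts unfolding m_def R_def by (auto simp: lessThan_atLeast0)
  define K where "K r Q = (if r < m then
      ((if wm (quad S Q) = vr r then 1 else 0) - (if wp (quad S Q) = vr r then 1 else 0)) +
      \<i> * rho S Q * ((if bp (quad S Q) = vr r then 1 else 0) - (if bm (quad S Q) = vr r then 1 else 0))
    else if r < m + g then complex_of_int (Bcount (\<alpha> (r - m)) (quad S Q))
    else \<i> * rho S Q * complex_of_int (Wcount (\<alpha> (r - m - g)) (quad S Q)))" for r Q
  define rhs :: "(nat \<Rightarrow> complex) \<Rightarrow> (nat \<Rightarrow> complex) \<Rightarrow> nat \<Rightarrow> complex"
    where "rhs a b r = (if r < m then 0 else if r < m + g then a (r - m) else b (r - m - g))" for a b r
  have row_vertex: "(\<Sum>Q\<in>faces S. K r Q * \<theta> Q) =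
      black_circulation S \<theta> (vr r) + white_circulation S (white_coeff S \<theta>) (vr r)" if "r < m" for \<theta> r
    unfolding black_circulation_def white_circulation_def white_coeff_def sum.distrib[symmetric]
    using that by (intro sum.cong refl) (simp add: K_def algebra_simps)
  have row_black: "(\<Sum>Q\<in>faces S. K (m + j) Q * \<theta> Q) = black_integral S \<theta> (pchain (\<alpha> j))" if "j < g" for \<theta> j
    using that by (simp add: K_def black_integral_eq_sum_Bcount mult.commute)
  have row_white: "(\<Sum>Q\<in>faces S. K (m + g + j) Q * \<theta> Q) = white_integral S (white_coeff S \<theta>) (pchain (\<alpha> j))"
    for \<theta> j
    by (simp add: K_def white_integral_def Wcount_eq_white_count white_coeff_def algebra_simps)
  have vertex_rows: "(\<forall>r<m. P (vr r)) \<longleftrightarrow> (\<forall>v\<in>R. P v)" for P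
    using vr by (auto simp: bij_betw_def)
  have solves: "(\<forall>r<m + g + g. (\<Sum>Q\<in>faces S. K r Q * \<theta> Q) = rhs a b r) \<longleftrightarrow>
      holo_coeff S \<theta> \<and> (\<forall>j<g. black_integral S \<theta> (pchain (\<alpha> j)) = a j \<and>
                              white_integral S (white_coeff S \<theta>) (pchain (\<alpha> j)) = b j)" for \<theta> a b
  proof -
    have "(\<forall>r<m + g + g. (\<Sum>Q\<in>faces S. K r Q * \<theta> Q) = rhs a b r) \<longleftrightarrow>
        (\<forall>r<m. black_circulation S \<theta> (vr r) + white_circulation S (white_coeff S \<theta>) (vr r) = 0) \<and>
        (\<forall>j<g. black_integral S \<theta> (pchain (\<alpha> j)) = a j) \<and>
        (\<forall>j<g. white_integral S (white_coeff S \<theta>) (pchain (\<alpha> j)) = b j)"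
      unfolding all_less_three_blocks by (simp add: row_vertex row_black row_white rhs_def)
    also have "\<dots> \<longleftrightarrow> holo_coeff S \<theta> \<and> (\<forall>j<g. black_integral S \<theta> (pchain (\<alpha> j)) = a j \<and>
                              white_integral S (white_coeff S \<theta>) (pchain (\<alpha> j)) = b j)"
      unfolding holo_coeff_iff_off_face[OF Q0, folded R_def]
      using vertex_rows[of "\<lambda>v. black_circulation S \<theta> v + white_circulation S (white_coeff S \<theta>) v = 0"]
      by auto
    finally show ?thesis .
  qed
  show thesis
  proof (rule that)
    show "(\<forall>r<card (faces S). (\<Sum>Q\<in>faces S. K r Q * \<theta> Q) = rhs a b r) \<longleftrightarrow>
      holo_coeff S \<theta> \<and> (\<forall>j<g. black_integral S \<theta> (pchain (\<alpha> j)) = a j \<and>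
                              white_integral S (white_coeff S \<theta>) (pchain (\<alpha> j)) = b j)" for \<theta> a b
      unfolding n by (rule solves)
  qed (simp add: rhs_def)
qed

lemma holo_coeff_exists:
  assumes SB: "symplectic_basis S g \<alpha> \<beta>"
  shows "\<exists>\<theta>. holo_coeff S \<theta> \<and> (\<forall>j<g. black_integral S \<theta> (pchain (\<alpha> j)) = a j \<and>
                                   white_integral S (white_coeff S \<theta>) (pchain (\<alpha> j)) = b j)"
proof -
  obtain K rhs where system:
    "\<And>\<theta> a b. (\<forall>r<card (faces S). (\<Sum>Q\<in>faces S. K r Q * \<theta> Q) = rhs a b r) \<longleftrightarrow>
      holo_coeff S \<theta> \<and> (\<forall>j<g. black_integral S \<theta> (pchain (\<alpha> j)) = a j \<and>
                              white_integral S (white_coeff S \<theta>) (pchain (\<alpha> j)) = b j)"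
    and homogeneous: "\<And>r. rhs (\<lambda>_. 0) (\<lambda>_. 0) r = 0"
    using holo_coeff_square_system[where \<alpha> = \<alpha>] by blast
  obtain enum where enum: "bij_betw enum {..<card (faces S)} (faces S)"
    using ex_bij_betw_nat_finite[of "faces S"] finite_faces by (auto simp: lessThan_atLeast0)
  have "\<exists>\<theta>. \<forall>r<card (faces S). (\<Sum>Q\<in>faces S. K r Q * \<theta> Q) = rhs a b r"
  proof (rule square_system_solvable[OF enum])
    fix \<theta> assume "\<forall>r<card (faces S). (\<Sum>Q\<in>faces S. K r Q * \<theta> Q) = 0"
    then have "holo_coeff S \<theta> \<and> (\<forall>j<g. black_integral S \<theta> (pchain (\<alpha> j)) = 0 \<and>
        white_integral S (white_coeff S \<theta>) (pchain (\<alpha> j)) = 0)"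
      using system[of \<theta> "\<lambda>_. 0" "\<lambda>_. 0"] homogeneous by simp
    then show "\<forall>Q\<in>faces S. \<theta> Q = 0" using holo_coeff_eq_0_if_a_periods_eq_0[OF SB] by simp
  qed
  then show ?thesis using system by blast
qed

lemma holo_diff_unique:
  assumes SB: "symplectic_basis S g \<alpha> \<beta>" and hol: "holo_diff S \<omega>" "holo_diff S \<omega>'"
    and periods: "\<forall>j<g. bper S \<omega> (\<alpha> j) = bper S \<omega>' (\<alpha> j) \<and> wper S \<omega> (\<alpha> j) = wper S \<omega>' (\<alpha> j)"
  shows "\<omega> = \<omega>'"
proof -
  let ?\<theta> = "black_value S \<omega>" and ?\<theta>' = "black_value S \<omega>'"
  have "\<forall>Q\<in>faces S. ?\<theta> Q - ?\<theta>' Q = 0"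
  proof (rule holo_coeff_eq_0_if_a_periods_eq_0[OF SB])
    show "holo_coeff S (\<lambda>Q. ?\<theta> Q - ?\<theta>' Q)"
      using holo_coeff_diff holo_diff_eq_holo_form(2) hol by blast
    show "\<forall>j<g. black_integral S (\<lambda>Q. ?\<theta> Q - ?\<theta>' Q) (pchain (\<alpha> j)) = 0 \<and>
        white_integral S (white_coeff S (\<lambda>Q. ?\<theta> Q - ?\<theta>' Q)) (pchain (\<alpha> j)) = 0"
      using periods
      by (simp add: black_integral_coeff_diff white_integral_coeff_diff white_coeff_diff
          bper_eq_black_period[OF hol(1)] bper_eq_black_period[OF hol(2)] black_period_def
          wper_eq_white_period[OF hol(1)] wper_eq_white_period[OF hol(2)] white_period_def)
  qed
  then have "holo_form S ?\<theta> = holo_form S ?\<theta>'" by (intro holo_form_cong) simp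
  moreover have "\<omega> = holo_form S ?\<theta>" "\<omega>' = holo_form S ?\<theta>'"
    using holo_diff_eq_holo_form(1) hol by blast+
  ultimately show ?thesis by simp
qed

lemma holo_diff_exists:
  assumes SB: "symplectic_basis S g \<alpha> \<beta>"
  shows "\<exists>\<omega>. holo_diff S \<omega> \<and> (\<forall>j<g. bper S \<omega> (\<alpha> j) = a j \<and> wper S \<omega> (\<alpha> j) = b j)"
proof -
  obtain \<theta> where "holo_coeff S \<theta>" and periods: "\<forall>j<g. black_integral S \<theta> (pchain (\<alpha> j)) = a j / 2 \<and>
      white_integral S (white_coeff S \<theta>) (pchain (\<alpha> j)) = b j / 2"
    using holo_coeff_exists[OF SB, of "\<lambda>j. a j / 2" "\<lambda>j. b j / 2"] by blast
  then show ?thesis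
    by (intro exI[of _ "holo_form S \<theta>"]) (simp add: holo_diff_holo_form_iff bper_holo_form wper_holo_form mult.commute)
qed

lemma omegaB_eq:
  assumes SB: "symplectic_basis S g \<alpha> \<beta>" and "holo_diff S \<omega>"
    and "\<forall>j<g. bper S \<omega> (\<alpha> j) = (if j = k then 1 else 0) \<and> wper S \<omega> (\<alpha> j) = 0"
  shows "omegaB S g \<alpha> k = \<omega>"
  unfolding omegaB_def
proof (rule the_equality)
  show "\<omega>' = \<omega>" if "holo_diff S \<omega>' \<and> (\<forall>j<g. bper S \<omega>' (\<alpha> j) = (if j = k then 1 else 0) \<and> wper S \<omega>' (\<alpha> j) = 0)"
    for \<omega>'
    using holo_diff_unique[OF SB, of \<omega>' \<omega>] that assms(2,3) by simp
qed (use assms(2,3) in blast)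

lemma omegaW_eq:
  assumes SB: "symplectic_basis S g \<alpha> \<beta>" and "holo_diff S \<omega>"
    and "\<forall>j<g. wper S \<omega> (\<alpha> j) = (if j = k then 1 else 0) \<and> bper S \<omega> (\<alpha> j) = 0"
  shows "omegaW S g \<alpha> k = \<omega>"
  unfolding omegaW_def
proof (rule the_equality)
  show "\<omega>' = \<omega>" if "holo_diff S \<omega>' \<and> (\<forall>j<g. wper S \<omega>' (\<alpha> j) = (if j = k then 1 else 0) \<and> bper S \<omega>' (\<alpha> j) = 0)"
    for \<omega>'
    using holo_diff_unique[OF SB, of \<omega>' \<omega>] that assms(2,3) by simp
qed (use assms(2,3) in blast)

lemma omegaB:
  assumes SB: "symplectic_basis S g \<alpha> \<beta>"
  shows "holo_diff S (omegaB S g \<alpha> k)"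
    and "\<forall>j<g. bper S (omegaB S g \<alpha> k) (\<alpha> j) = (if j = k then 1 else 0) \<and> wper S (omegaB S g \<alpha> k) (\<alpha> j) = 0"
proof -
  obtain \<omega> where \<omega>: "holo_diff S \<omega>" "\<forall>j<g. bper S \<omega> (\<alpha> j) = (if j = k then 1 else 0) \<and> wper S \<omega> (\<alpha> j) = 0"
    using holo_diff_exists[OF SB, of "\<lambda>j. if j = k then 1 else 0" "\<lambda>_. 0"] by blast
  moreover from \<omega> have "omegaB S g \<alpha> k = \<omega>" by (rule omegaB_eq[OF SB])
  ultimately show "holo_diff S (omegaB S g \<alpha> k)"
    "\<forall>j<g. bper S (omegaB S g \<alpha> k) (\<alpha> j) = (if j = k then 1 else 0) \<and> wper S (omegaB S g \<alpha> k) (\<alpha> j) = 0"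
    by simp_all
qed

lemma omegaW:
  assumes SB: "symplectic_basis S g \<alpha> \<beta>"
  shows "holo_diff S (omegaW S g \<alpha> k)"
    and "\<forall>j<g. wper S (omegaW S g \<alpha> k) (\<alpha> j) = (if j = k then 1 else 0) \<and> bper S (omegaW S g \<alpha> k) (\<alpha> j) = 0"
proof -
  obtain \<omega> where \<omega>: "holo_diff S \<omega>" "\<forall>j<g. wper S \<omega> (\<alpha> j) = (if j = k then 1 else 0) \<and> bper S \<omega> (\<alpha> j) = 0"
    using holo_diff_exists[OF SB, of "\<lambda>_. 0" "\<lambda>j. if j = k then 1 else 0"] by auto
  moreover from \<omega> have "omegaW S g \<alpha> k = \<omega>" by (rule omegaW_eq[OF SB])
  ultimately show "holo_diff S (omegaW S g \<alpha> k)"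
    "\<forall>j<g. wper S (omegaW S g \<alpha> k) (\<alpha> j) = (if j = k then 1 else 0) \<and> bper S (omegaW S g \<alpha> k) (\<alpha> j) = 0"
    by simp_all
qed

end

section \<open>The antiholomorphic involution\<close>

definition tau_edge :: "('v \<Rightarrow> 'v) \<Rightarrow> 'v set \<times> 'v set \<Rightarrow> 'v set \<times> 'v set" where
  "tau_edge \<tau> e = (\<tau> ` fst e, \<tau> ` snd e)"

definition reflect_form :: "('v, 'f) drs \<Rightarrow> ('v \<Rightarrow> 'v) \<Rightarrow> ('v set \<times> 'v set \<Rightarrow> complex) \<Rightarrow> 'v set \<times> 'v set \<Rightarrow> complex" where
  "reflect_form S \<tau> \<omega> e = (if e \<in> Xedges S then cnj (\<omega> (tau_edge \<tau> e)) else 0)"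

text \<open>\<open>Q'\<close> is the image of \<open>Q\<close> under \<open>\<tau>\<close>: the four cases are the four rotations of the reversed
  boundary cycle.\<close>
definition mirror_face :: "('v, 'f) drs \<Rightarrow> ('v \<Rightarrow> 'v) \<Rightarrow> 'f \<Rightarrow> 'f \<Rightarrow> bool" where
  "mirror_face S \<tau> Q Q' \<longleftrightarrow> (let q = quad S Q; q' = quad S Q' in
    (bm q' = \<tau> (wp q) \<and> wm q' = \<tau> (bp q) \<and> bp q' = \<tau> (wm q) \<and> wp q' = \<tau> (bm q)) \<or>
    (wm q' = \<tau> (wp q) \<and> bp q' = \<tau> (bp q) \<and> wp q' = \<tau> (wm q) \<and> bm q' = \<tau> (bm q)) \<or>
    (bp q' = \<tau> (wp q) \<and> wp q' = \<tau> (bp q) \<and> bm q' = \<tau> (wm q) \<and> wm q' = \<tau> (bm q)) \<or>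
    (wp q' = \<tau> (wp q) \<and> bm q' = \<tau> (bp q) \<and> wm q' = \<tau> (wm q) \<and> bp q' = \<tau> (bm q)))"

lemma rotate_4_cases:
  "rotate n [a, b, c, d] = [a, b, c, d] \<or> rotate n [a, b, c, d] = [b, c, d, a] \<or>
   rotate n [a, b, c, d] = [c, d, a, b] \<or> rotate n [a, b, c, d] = [d, a, b, c]"
proof -
  have r: "rotate n [a, b, c, d] = rotate (n mod 4) [a, b, c, d]" by (subst rotate_conv_mod) simp
  have "n mod 4 = 0 \<or> n mod 4 = Suc 0 \<or> n mod 4 = Suc (Suc 0) \<or> n mod 4 = Suc (Suc (Suc 0))" by arith
  then show ?thesis unfolding r by (elim disjE) (simp_all add: rotate_Suc)
qed

lemma tau_edge_medial_edge: "tau_edge \<tau> (medial_edge (u, v, w)) = medial_edge (\<tau> u, \<tau> v, \<tau> w)"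
  by (simp add: tau_edge_def medial_edge_def)

lemma tau_edge_swap: "tau_edge \<tau> (prod.swap e) = prod.swap (tau_edge \<tau> e)"
  by (simp add: tau_edge_def prod.swap_def)

lemma pedges_tau_path: "pedges (tau_path \<tau> xs) = map (tau_edge \<tau>) (pedges xs)"
  unfolding pedges_def tau_path_def by (simp add: map_tl[symmetric] zip_map_map tau_edge_def split_def)

lemma cnj_sum_list: "cnj (sum_list xs) = sum_list (map cnj xs)"
  by (induction xs) auto

lemma cnj_holomorphy_relation:
  "a - b = \<i> * cnj r * (c - d) \<Longrightarrow> cnj b - cnj a = \<i> * r * (cnj c - cnj d)"
  by (drule arg_cong[where f = cnj]) (simp add: algebra_simps)

lemma cnj_holomorphy_relation_inverse:
  assumes "r \<noteq> 0" "a - b = \<i> * (1 / cnj r) * (c - d)"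
  shows "cnj d - cnj c = \<i> * r * (cnj b - cnj a)"
proof -
  have "cnj a - cnj b = - (\<i> * (cnj c - cnj d) / r)"
    using arg_cong[where f = cnj, OF assms(2)] by simp
  then have "r * (cnj a - cnj b) = - (\<i> * (cnj c - cnj d))" using assms(1) by (simp add: field_simps)
  then have "\<i> * r * (cnj a - cnj b) = cnj c - cnj d"
    by (metis (no_types, lifting) i_squared minus_diff_eq mult.assoc mult_minus_left mult_minus1 mult.left_commute)
  then show ?thesis by (simp add: algebra_simps)
qed

locale discrete_real_surface = discrete_surface +
  fixes \<tau> :: "'v \<Rightarrow> 'v"
  assumes antihol: "antihol_base S \<tau>"
begin

lemma tau_verts: "v \<in> verts S \<Longrightarrow> \<tau> v \<in> verts S \<and> \<tau> (\<tau> v) = v"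
  using antihol unfolding antihol_base_def by blast

lemma tau_inj: "u \<in> verts S \<Longrightarrow> v \<in> verts S \<Longrightarrow> \<tau> u = \<tau> v \<Longrightarrow> u = v"
  using tau_verts by metis

lemma mirror_face_exists:
  assumes "Q \<in> faces S"
  obtains Q' where "Q' \<in> faces S" "mirror_face S \<tau> Q Q'"
proof -
  obtain Q' n where Q': "Q' \<in> faces S"
    and r: "rotate n (cyc (quad S Q')) = rev (map \<tau> (cyc (quad S Q)))"
    using antihol assms unfolding antihol_base_def by blast
  have "mirror_face S \<tau> Q Q'"
    using rotate_4_cases[of n "bm (quad S Q')" "wm (quad S Q')" "bp (quad S Q')" "wp (quad S Q')"]
      r[unfolded cyc_def]
    unfolding mirror_face_def Let_def by (elim disjE) simp_all
  with Q' that show thesis by blast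
qed

lemma mirror_face_cases:
  assumes "mirror_face S \<tau> Q Q'"
  obtains
    "bm (quad S Q') = \<tau> (wp (quad S Q))" "wm (quad S Q') = \<tau> (bp (quad S Q))"
    "bp (quad S Q') = \<tau> (wm (quad S Q))" "wp (quad S Q') = \<tau> (bm (quad S Q))"
  | "wm (quad S Q') = \<tau> (wp (quad S Q))" "bp (quad S Q') = \<tau> (bp (quad S Q))"
    "wp (quad S Q') = \<tau> (wm (quad S Q))" "bm (quad S Q') = \<tau> (bm (quad S Q))"
  | "bp (quad S Q') = \<tau> (wp (quad S Q))" "wp (quad S Q') = \<tau> (bp (quad S Q))"
    "bm (quad S Q') = \<tau> (wm (quad S Q))" "wm (quad S Q') = \<tau> (bm (quad S Q))"
  | "wp (quad S Q') = \<tau> (wp (quad S Q))" "bm (quad S Q') = \<tau> (bp (quad S Q))"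
    "wm (quad S Q') = \<tau> (wm (quad S Q))" "bp (quad S Q') = \<tau> (bm (quad S Q))"
  using assms unfolding mirror_face_def Let_def by blast

lemma mirror_face_triples:
  assumes "mirror_face S \<tau> Q Q'" "(u, v, w) \<in> triples (quad S Q)"
  shows "(\<tau> w, \<tau> v, \<tau> u) \<in> triples (quad S Q')"
proof -
  have "(u, v, w) = corner_wm (quad S Q) \<or> (u, v, w) = corner_bp (quad S Q) \<or>
      (u, v, w) = corner_wp (quad S Q) \<or> (u, v, w) = corner_bm (quad S Q)"
    using assms(2) by (simp add: triples_corners)
  then show ?thesis using assms(1) unfolding mirror_face_def Let_def triples_corners
    by (elim disjE conjE; simp only: corner_defs prod.inject; elim conjE; hypsubst; simp)
qed

lemma mirror_face_qverts:
  assumes "mirror_face S \<tau> Q Q'"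
  shows "qverts (quad S Q') = \<tau> ` qverts (quad S Q)"
  using assms unfolding mirror_face_def Let_def qverts_def cyc_def
  by (elim disjE conjE; simp only: list.set image_insert image_empty; blast)

lemma tau_edge_Xedges:
  assumes "e \<in> Xedges S"
  shows "tau_edge \<tau> e \<in> Xedges S"
proof -
  obtain Q u v w where Q: "Q \<in> faces S" and t: "(u, v, w) \<in> triples (quad S Q)"
    and e: "e = medial_edge (u, v, w) \<or> e = prod.swap (medial_edge (u, v, w))"
    using assms unfolding Xedges_iff by fastforce
  obtain Q' where Q': "Q' \<in> faces S" "mirror_face S \<tau> Q Q'" using mirror_face_exists[OF Q] by blast
  have t': "(\<tau> w, \<tau> v, \<tau> u) \<in> triples (quad S Q')" by (rule mirror_face_triples[OF Q'(2) t])
  have "tau_edge \<tau> (medial_edge (u, v, w)) = prod.swap (medial_edge (\<tau> w, \<tau> v, \<tau> u))"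
    by (simp add: tau_edge_medial_edge swap_medial_edge)
  then show ?thesis using e medial_edge_in_Xedges[OF Q'(1) t'] by (auto simp: tau_edge_swap)
qed

lemma tau_edge_tau_edge:
  assumes "e \<in> Xedges S"
  shows "tau_edge \<tau> (tau_edge \<tau> e) = e"
proof -
  have "fst e \<subseteq> verts S \<and> snd e \<subseteq> verts S"
    using assms face_verts unfolding Xedges_iff
    by (auto simp: triples_corners medial_edge_def corner_defs)
  moreover have "\<tau> ` \<tau> ` A = A" if "A \<subseteq> verts S" for A
    using that tau_verts by (force simp: image_image)
  ultimately show ?thesis by (simp add: tau_edge_def)
qed

lemma reflect_one_form:
  assumes "one_form S \<omega>"
  shows "one_form S (reflect_form S \<tau> \<omega>)"
  unfolding one_form_def
proof (intro conjI allI impI ballI)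
  fix e assume e: "e \<in> Xedges S"
  have "\<omega> (prod.swap (tau_edge \<tau> e)) = - \<omega> (tau_edge \<tau> e)"
    using assms tau_edge_Xedges[OF e] unfolding one_form_def prod.swap_def by auto
  then show "reflect_form S \<tau> \<omega> (snd e, fst e) = - reflect_form S \<tau> \<omega> e"
    using e swap_in_Xedges[OF e] tau_edge_swap[of \<tau> e] by (simp add: reflect_form_def prod.swap_def)
qed (simp add: reflect_form_def)

lemma reflect_form_medial_edge:
  assumes one: "one_form S \<omega>" and Q: "Q \<in> faces S" and Q': "Q' \<in> faces S" "mirror_face S \<tau> Q Q'"
    and f: "\<forall>(u, v, w)\<in>triples (quad S Q'). \<omega> ({u, v}, {v, w}) = (f w - f u) / 2"
    and t: "(u, v, w) \<in> triples (quad S Q)"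
  shows "reflect_form S \<tau> \<omega> ({u, v}, {v, w}) = (cnj (f (\<tau> w)) - cnj (f (\<tau> u))) / 2"
proof -
  have t': "(\<tau> w, \<tau> v, \<tau> u) \<in> triples (quad S Q')" by (rule mirror_face_triples[OF Q'(2) t])
  have "tau_edge \<tau> (medial_edge (u, v, w)) = prod.swap (medial_edge (\<tau> w, \<tau> v, \<tau> u))"
    by (simp add: tau_edge_medial_edge swap_medial_edge)
  then have "\<omega> (tau_edge \<tau> (medial_edge (u, v, w))) = - \<omega> (medial_edge (\<tau> w, \<tau> v, \<tau> u))"
    using one medial_edge_in_Xedges(1)[OF Q'(1) t'] unfolding one_form_def by (simp add: prod.swap_def)
  also have "\<omega> (medial_edge (\<tau> w, \<tau> v, \<tau> u)) = (f (\<tau> u) - f (\<tau> w)) / 2"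
    using f t' by (auto simp: medial_edge_def)
  finally have "cnj (\<omega> (tau_edge \<tau> (medial_edge (u, v, w)))) = cnj (- ((f (\<tau> u) - f (\<tau> w)) / 2))"
    by (rule arg_cong)
  also have "\<dots> = (cnj (f (\<tau> w)) - cnj (f (\<tau> u))) / 2" by (simp add: field_simps)
  moreover have "reflect_form S \<tau> \<omega> ({u, v}, {v, w}) = cnj (\<omega> (tau_edge \<tau> (medial_edge (u, v, w))))"
    using medial_edge_in_Xedges(1)[OF Q t] by (simp add: reflect_form_def medial_edge_def)
  ultimately show ?thesis by simp
qed

text \<open>In Type 1 the mirror face swaps either the two white or the two black vertices; in Type 2
  it exchanges the colours, which turns \<open>\<rho>\<close> into \<open>1 / cnj \<rho>\<close>.\<close>
lemma disc_holomorphic_on_reflect_type1: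
  assumes T: "is_type1 S \<tau>" and Q: "Q \<in> faces S" and Q': "Q' \<in> faces S" "mirror_face S \<tau> Q Q'"
    and hol: "disc_holomorphic_on (rho S Q') (quad S Q') f"
  shows "disc_holomorphic_on (rho S Q) (quad S Q) (\<lambda>x. cnj (f (\<tau> x)))"
proof -
  let ?q = "quad S Q" and ?q' = "quad S Q'"
  have H: "f (wp ?q') - f (wm ?q') = \<i> * rho S Q' * (f (bp ?q') - f (bm ?q'))"
    using hol by (simp add: disc_holomorphic_on_def)
  have rho: "rho S Q' = cnj (rho S Q)"
    using T Q Q' mirror_face_qverts[OF Q'(2)] unfolding is_type1_def by blast
  have col: "blk S (\<tau> (wp ?q)) = blk S (wp ?q)" using T face_verts[OF Q] unfolding is_type1_def by blast
  from Q'(2) show ?thesis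
  proof (cases rule: mirror_face_cases)
    case 2
    then show ?thesis using cnj_holomorphy_relation[of "f (\<tau> (wm ?q))"] H rho
      by (simp add: disc_holomorphic_on_def)
  next
    case 4
    then have "f (\<tau> (wp ?q)) - f (\<tau> (wm ?q)) = \<i> * cnj (rho S Q) * (f (\<tau> (bm ?q)) - f (\<tau> (bp ?q)))"
      using H rho by simp
    from cnj_holomorphy_relation[OF this] show ?thesis
      by (simp add: disc_holomorphic_on_def algebra_simps)
  qed (use face_colors[OF Q] face_colors[OF Q'(1)] col in simp_all)
qed

lemma disc_holomorphic_on_reflect_type2:
  assumes T: "is_type2 S \<tau>" and Q: "Q \<in> faces S" and Q': "Q' \<in> faces S" "mirror_face S \<tau> Q Q'"
    and hol: "disc_holomorphic_on (rho S Q') (quad S Q') f"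
  shows "disc_holomorphic_on (rho S Q) (quad S Q) (\<lambda>x. cnj (f (\<tau> x)))"
proof -
  let ?q = "quad S Q" and ?q' = "quad S Q'"
  have H: "f (wp ?q') - f (wm ?q') = \<i> * rho S Q' * (f (bp ?q') - f (bm ?q'))"
    using hol by (simp add: disc_holomorphic_on_def)
  have rho: "rho S Q' = 1 / cnj (rho S Q)"
    using T Q Q' mirror_face_qverts[OF Q'(2)] unfolding is_type2_def by blast
  have r0: "rho S Q \<noteq> 0" using Re_rho_pos[OF Q] by auto
  have col: "blk S (\<tau> (bm ?q)) \<noteq> blk S (bm ?q)" using T face_verts[OF Q] unfolding is_type2_def by blast
  from Q'(2) show ?thesis
  proof (cases rule: mirror_face_cases)
    case 1
    then have "f (\<tau> (bm ?q)) - f (\<tau> (bp ?q)) = \<i> * (1 / cnj (rho S Q)) * (f (\<tau> (wm ?q)) - f (\<tau> (wp ?q)))"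
      using H rho by simp
    from cnj_holomorphy_relation_inverse[OF r0 this] show ?thesis
      by (simp add: disc_holomorphic_on_def)
  next
    case 3
    then have "f (\<tau> (bp ?q)) - f (\<tau> (bm ?q)) = \<i> * (1 / cnj (rho S Q)) * (f (\<tau> (wp ?q)) - f (\<tau> (wm ?q)))"
      using H rho by simp
    from cnj_holomorphy_relation_inverse[OF r0 this] show ?thesis
      by (simp add: disc_holomorphic_on_def algebra_simps)
  qed (use face_colors[OF Q] face_colors[OF Q'(1)] col in simp_all)
qed

lemma Fv_edges_reflect:
  assumes v: "v \<in> verts S"
  shows "bij_betw (\<lambda>e. prod.swap (tau_edge \<tau> e)) (Fv_edges S v) (Fv_edges S (\<tau> v))"
proof -
  have maps: "prod.swap (tau_edge \<tau> e) \<in> Fv_edges S (\<tau> x)" if e_in: "e \<in> Fv_edges S x" for e x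
  proof -
    obtain Q p s where Q: "Q \<in> faces S" and t: "(p, x, s) \<in> triples (quad S Q)" and e: "e = ({p, x}, {x, s})"
      using e_in unfolding Fv_edges_def by blast
    obtain Q' where Q': "Q' \<in> faces S" "mirror_face S \<tau> Q Q'" using mirror_face_exists[OF Q] by blast
    have "prod.swap (tau_edge \<tau> e) = ({\<tau> s, \<tau> x}, {\<tau> x, \<tau> p})"
      by (auto simp: e tau_edge_def)
    then show ?thesis
      using Q' mirror_face_triples[OF Q'(2) t] unfolding Fv_edges_def by blast
  qed
  have inv: "prod.swap (tau_edge \<tau> (prod.swap (tau_edge \<tau> e))) = e" if "e \<in> Fv_edges S x" for e x
  proof -
    have "e \<in> Xedges S" using that Fv_edges_subset by blast
    then show ?thesis using tau_edge_tau_edge by (simp add: tau_edge_swap)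
  qed
  show ?thesis
  proof (rule bij_betw_byWitness[where f' = "\<lambda>e. prod.swap (tau_edge \<tau> e)"])
    show "\<forall>e\<in>Fv_edges S v. prod.swap (tau_edge \<tau> (prod.swap (tau_edge \<tau> e))) = e"
      "\<forall>e\<in>Fv_edges S (\<tau> v). prod.swap (tau_edge \<tau> (prod.swap (tau_edge \<tau> e))) = e"
      using inv by blast+
    show "(\<lambda>e. prod.swap (tau_edge \<tau> e)) ` Fv_edges S v \<subseteq> Fv_edges S (\<tau> v)" using maps by blast
    show "(\<lambda>e. prod.swap (tau_edge \<tau> e)) ` Fv_edges S (\<tau> v) \<subseteq> Fv_edges S v"
      using maps[of _ "\<tau> v"] tau_verts[OF v] by auto
  qed
qed

lemma reflect_locally_holomorphic:
  assumes T: "is_type1 S \<tau> \<or> is_type2 S \<tau>" and hol: "holo_diff S \<omega>"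
  shows "locally_holomorphic S (reflect_form S \<tau> \<omega>)"
  unfolding locally_holomorphic_def
proof
  have one: "one_form S \<omega>" using hol by (simp add: holo_diff_def)
  fix Q assume Q: "Q \<in> faces S"
  obtain Q' where Q': "Q' \<in> faces S" "mirror_face S \<tau> Q Q'" using mirror_face_exists[OF Q] by blast
  obtain f where "disc_holomorphic_on (rho S Q') (quad S Q') f"
    and "\<forall>(u, v, w)\<in>triples (quad S Q'). \<omega> ({u, v}, {v, w}) = (f w - f u) / 2"
    using hol Q'(1) unfolding holo_diff_def by blast
  then show "\<exists>f. disc_holomorphic_on (rho S Q) (quad S Q) f \<and>
      (\<forall>(u, v, w)\<in>triples (quad S Q). reflect_form S \<tau> \<omega> ({u, v}, {v, w}) = (f w - f u) / 2)"
    using T disc_holomorphic_on_reflect_type1[OF _ Q Q'] disc_holomorphic_on_reflect_type2[OF _ Q Q']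
      reflect_form_medial_edge[OF one Q Q']
    by (intro exI[of _ "\<lambda>x. cnj (f (\<tau> x))"]) auto
qed

lemma sum_Fv_reflect_form:
  assumes hol: "holo_diff S \<omega>" and v: "v \<in> verts S"
  shows "(\<Sum>e\<in>Fv_edges S v. reflect_form S \<tau> \<omega> e) = 0"
proof -
  have one: "one_form S \<omega>" using hol by (simp add: holo_diff_def)
  have "(\<Sum>e\<in>Fv_edges S v. reflect_form S \<tau> \<omega> e) = (\<Sum>e\<in>Fv_edges S v. - cnj (\<omega> (prod.swap (tau_edge \<tau> e))))"
  proof (rule sum.cong[OF refl])
    fix e assume e: "e \<in> Fv_edges S v"
    then have eX: "e \<in> Xedges S" using Fv_edges_subset by blast
    have "\<omega> (prod.swap (tau_edge \<tau> e)) = - \<omega> (tau_edge \<tau> e)"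
      using one tau_edge_Xedges[OF eX] unfolding one_form_def prod.swap_def by auto
    then show "reflect_form S \<tau> \<omega> e = - cnj (\<omega> (prod.swap (tau_edge \<tau> e)))"
      using eX by (simp add: reflect_form_def)
  qed
  also have "\<dots> = - cnj (\<Sum>e\<in>Fv_edges S v. \<omega> (prod.swap (tau_edge \<tau> e)))"
    by (simp add: sum_negf cnj_sum)
  also have "(\<Sum>e\<in>Fv_edges S v. \<omega> (prod.swap (tau_edge \<tau> e))) = (\<Sum>e\<in>Fv_edges S (\<tau> v). \<omega> e)"
    by (rule sum.reindex_bij_betw[OF Fv_edges_reflect[OF v]])
  also have "\<dots> = 0"
    using hol tau_verts[OF v] unfolding holo_diff_def closed_form_def by simp
  finally show ?thesis by simp
qed

lemma reflect_holo_diff: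
  assumes "is_type1 S \<tau> \<or> is_type2 S \<tau>" and hol: "holo_diff S \<omega>"
  shows "holo_diff S (reflect_form S \<tau> \<omega>)"
proof -
  have "one_form S \<omega>" using hol by (simp add: holo_diff_def)
  then show ?thesis
    using reflect_one_form reflect_locally_holomorphic[OF assms] sum_Fv_reflect_form[OF hol]
    unfolding holo_diff_iff_local by blast
qed

lemma colors_tau_edge:
  assumes e: "e \<in> Xedges S"
  shows "is_type1 S \<tau> \<Longrightarrow> black_Xe S (tau_edge \<tau> e) = black_Xe S e"
    and "is_type1 S \<tau> \<Longrightarrow> white_Xe S (tau_edge \<tau> e) = white_Xe S e"
    and "is_type2 S \<tau> \<Longrightarrow> black_Xe S (tau_edge \<tau> e) = white_Xe S e"
    and "is_type2 S \<tau> \<Longrightarrow> white_Xe S (tau_edge \<tau> e) = black_Xe S e"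
proof -
  obtain Q u v w where Q: "Q \<in> faces S" and t: "(u, v, w) \<in> triples (quad S Q)"
    and et: "e = medial_edge (u, v, w) \<or> e = prod.swap (medial_edge (u, v, w))"
    using e unfolding Xedges_iff by fastforce
  have d: "u \<noteq> v" "v \<noteq> w" "u \<noteq> w" using triple_distinct[OF Q t] by auto
  have vs: "u \<in> verts S" "v \<in> verts S" "w \<in> verts S" using triple_verts[OF Q t] by auto
  have d': "\<tau> u \<noteq> \<tau> v" "\<tau> v \<noteq> \<tau> w" "\<tau> u \<noteq> \<tau> w" using d vs tau_inj by metis+
  have base: "black_Xe S (tau_edge \<tau> e) = black_Xe S (medial_edge (\<tau> u, \<tau> v, \<tau> w))"
    "white_Xe S (tau_edge \<tau> e) = white_Xe S (medial_edge (\<tau> u, \<tau> v, \<tau> w))"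
    "black_Xe S e = black_Xe S (medial_edge (u, v, w))" "white_Xe S e = white_Xe S (medial_edge (u, v, w))"
    using et by (auto simp: tau_edge_swap tau_edge_medial_edge black_Xe_swap white_Xe_swap)
  show "is_type1 S \<tau> \<Longrightarrow> black_Xe S (tau_edge \<tau> e) = black_Xe S e"
    "is_type1 S \<tau> \<Longrightarrow> white_Xe S (tau_edge \<tau> e) = white_Xe S e"
    "is_type2 S \<tau> \<Longrightarrow> black_Xe S (tau_edge \<tau> e) = white_Xe S e"
    "is_type2 S \<tau> \<Longrightarrow> white_Xe S (tau_edge \<tau> e) = black_Xe S e"
    using vs unfolding base medial_edge_colors[OF d] medial_edge_colors[OF d'] is_type1_def is_type2_def
    by auto
qed

lemma sum_reflect_form_filter:
  assumes closed: "closed_Xpath S xs" and colors: "\<And>e. e \<in> Xedges S \<Longrightarrow> P (tau_edge \<tau> e) = P' e"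
  shows "2 * sum_list (map (reflect_form S \<tau> \<omega>) (filter P' (pedges xs))) =
         cnj (2 * sum_list (map \<omega> (filter P (pedges (tau_path \<tau> xs)))))"
proof -
  have sub: "set (pedges xs) \<subseteq> Xedges S" using closed by (simp add: closed_Xpath_def)
  have m: "map (reflect_form S \<tau> \<omega>) (filter P' (pedges xs)) = map (\<lambda>e. cnj (\<omega> (tau_edge \<tau> e))) (filter P' (pedges xs))"
    using sub by (intro map_cong refl) (auto simp: reflect_form_def)
  have f: "filter P (pedges (tau_path \<tau> xs)) = map (tau_edge \<tau>) (filter P' (pedges xs))"
    unfolding pedges_tau_path filter_map comp_def using sub colors
    by (intro arg_cong[where f = "map (tau_edge \<tau>)"] filter_cong) auto
  show ?thesis unfolding m f by (simp add: cnj_sum_list comp_def)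
qed

lemma periods_reflect_type1:
  assumes T: "is_type1 S \<tau>" and closed: "closed_Xpath S xs"
  shows "bper S (reflect_form S \<tau> \<omega>) xs = cnj (bper S \<omega> (tau_path \<tau> xs))"
    and "wper S (reflect_form S \<tau> \<omega>) xs = cnj (wper S \<omega> (tau_path \<tau> xs))"
  using sum_reflect_form_filter[where P = "black_Xe S" and P' = "black_Xe S", OF closed colors_tau_edge(1)[OF _ T]]
    sum_reflect_form_filter[where P = "white_Xe S" and P' = "white_Xe S", OF closed colors_tau_edge(2)[OF _ T]]
  unfolding bper_def wper_def by simp_all

lemma periods_reflect_type2:
  assumes T: "is_type2 S \<tau>" and closed: "closed_Xpath S xs"
  shows "bper S (reflect_form S \<tau> \<omega>) xs = cnj (wper S \<omega> (tau_path \<tau> xs))"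
    and "wper S (reflect_form S \<tau> \<omega>) xs = cnj (bper S \<omega> (tau_path \<tau> xs))"
  using sum_reflect_form_filter[where P = "black_Xe S" and P' = "white_Xe S", OF closed colors_tau_edge(3)[OF _ T]]
    sum_reflect_form_filter[where P = "white_Xe S" and P' = "black_Xe S", OF closed colors_tau_edge(4)[OF _ T]]
  unfolding bper_def wper_def by simp_all

end

section \<open>The period matrix\<close>

lemma Re_eq_if_eq_cnj_diff: "z = cnj (w - z) \<Longrightarrow> 2 * Re z = Re w"
  by (drule arg_cong[where f = Re]) simp

lemma sum_of_int_delta:
  fixes c :: "nat \<Rightarrow> int"
  assumes "k < g"
  shows "(\<Sum>l<g. of_int (c l) * (if l = k then 1 else 0)) = (of_int (c k) :: complex)"
  using assms by (simp add: if_distrib[where f = "\<lambda>x. _ * x"] cong: if_cong)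

locale real_symplectic_basis = discrete_real_surface +
  fixes \<alpha> \<beta> :: "nat \<Rightarrow> 'v set list" and h :: "nat \<Rightarrow> nat \<Rightarrow> int"
  assumes basis: "symplectic_basis S g \<alpha> \<beta>"
    and h_sym: "\<forall>i<g. \<forall>j<g. h i j = h j i"
    and tau_alpha: "\<forall>i<g. homologous S (pchain (tau_path \<tau> (\<alpha> i))) (pchain (\<alpha> i))"
    and tau_beta: "\<forall>i<g. homologous S (pchain (tau_path \<tau> (\<beta> i)))
                     (\<lambda>e. (\<Sum>j<g. h j i * pchain (\<alpha> j) e) - pchain (\<beta> i) e)"
begin

lemma closed_basis: "i < g \<Longrightarrow> closed_Xpath S (\<alpha> i)" "i < g \<Longrightarrow> closed_Xpath S (\<beta> i)"
  using basis by (auto simp: symplectic_basis_def)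

lemma periods_tau_alpha:
  assumes "holo_diff S \<omega>" "i < g"
  shows "bper S \<omega> (tau_path \<tau> (\<alpha> i)) = bper S \<omega> (\<alpha> i)"
    and "wper S \<omega> (tau_path \<tau> (\<alpha> i)) = wper S \<omega> (\<alpha> i)"
  using assms tau_alpha periods_homologous[OF assms(1)]
  by (simp_all add: bper_eq_black_period wper_eq_white_period)

lemma periods_tau_beta:
  assumes "holo_diff S \<omega>" "i < g"
  shows "bper S \<omega> (tau_path \<tau> (\<beta> i)) = (\<Sum>j<g. of_int (h j i) * bper S \<omega> (\<alpha> j)) - bper S \<omega> (\<beta> i)"
    and "wper S \<omega> (tau_path \<tau> (\<beta> i)) = (\<Sum>j<g. of_int (h j i) * wper S \<omega> (\<alpha> j)) - wper S \<omega> (\<beta> i)"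
proof -
  have "homologous S (pchain (tau_path \<tau> (\<beta> i))) (\<lambda>e. (\<Sum>j<g. h j i * pchain (\<alpha> j) e) - pchain (\<beta> i) e)"
    using tau_beta assms(2) by blast
  from periods_homologous[OF assms(1) this] show
    "bper S \<omega> (tau_path \<tau> (\<beta> i)) = (\<Sum>j<g. of_int (h j i) * bper S \<omega> (\<alpha> j)) - bper S \<omega> (\<beta> i)"
    "wper S \<omega> (tau_path \<tau> (\<beta> i)) = (\<Sum>j<g. of_int (h j i) * wper S \<omega> (\<alpha> j)) - wper S \<omega> (\<beta> i)"
    by (simp_all add: bper_eq_black_period[OF assms(1)] wper_eq_white_period[OF assms(1)]
        black_period_diff white_period_diff black_period_lincomb white_period_lincomb)
qed

text \<open>For Type 1, \<open>\<omega>\<^sup>B\<^sub>k\<close> and \<open>\<omega>\<^sup>W\<^sub>k\<close> are fixed by the reflection, having real \<open>a\<close>-periods;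
  for Type 2 the reflection exchanges them.\<close>
lemma reflect_omegaB_type1: "is_type1 S \<tau> \<Longrightarrow> reflect_form S \<tau> (omegaB S g \<alpha> k) = omegaB S g \<alpha> k"
  using omegaB[OF basis] periods_tau_alpha[OF omegaB(1)[OF basis]]
  by (intro omegaB_eq[OF basis, symmetric] reflect_holo_diff)
     (simp_all add: periods_reflect_type1 closed_basis)

lemma reflect_omegaW_type1: "is_type1 S \<tau> \<Longrightarrow> reflect_form S \<tau> (omegaW S g \<alpha> k) = omegaW S g \<alpha> k"
  using omegaW[OF basis] periods_tau_alpha[OF omegaW(1)[OF basis]]
  by (intro omegaW_eq[OF basis, symmetric] reflect_holo_diff)
     (simp_all add: periods_reflect_type1 closed_basis)

lemma reflect_omegaB_type2: "is_type2 S \<tau> \<Longrightarrow> reflect_form S \<tau> (omegaB S g \<alpha> k) = omegaW S g \<alpha> k"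
  using omegaB[OF basis] periods_tau_alpha[OF omegaB(1)[OF basis]]
  by (intro omegaW_eq[OF basis, symmetric] reflect_holo_diff)
     (simp_all add: periods_reflect_type2 closed_basis)

lemma beta_period_reflect_type1:
  assumes "is_type1 S \<tau>" "holo_diff S \<omega>" "j < g"
  shows "bper S (reflect_form S \<tau> \<omega>) (\<beta> j) = cnj ((\<Sum>l<g. of_int (h l j) * bper S \<omega> (\<alpha> l)) - bper S \<omega> (\<beta> j))"
    and "wper S (reflect_form S \<tau> \<omega>) (\<beta> j) = cnj ((\<Sum>l<g. of_int (h l j) * wper S \<omega> (\<alpha> l)) - wper S \<omega> (\<beta> j))"
  using assms by (simp_all add: periods_reflect_type1 closed_basis periods_tau_beta)

lemma beta_period_reflect_type2:
  assumes "is_type2 S \<tau>" "holo_diff S \<omega>" "j < g"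
  shows "bper S (reflect_form S \<tau> \<omega>) (\<beta> j) = cnj ((\<Sum>l<g. of_int (h l j) * wper S \<omega> (\<alpha> l)) - wper S \<omega> (\<beta> j))"
    and "wper S (reflect_form S \<tau> \<omega>) (\<beta> j) = cnj ((\<Sum>l<g. of_int (h l j) * bper S \<omega> (\<alpha> l)) - bper S \<omega> (\<beta> j))"
  using assms by (simp_all add: periods_reflect_type2 closed_basis periods_tau_beta)

lemma period_matrix_type1:
  assumes T: "is_type1 S \<tau>" and jk: "j < g" "k < g"
  shows "2 * Re (PiBB S g \<alpha> \<beta> j k) = of_int (h j k)" and "2 * Re (PiWW S g \<alpha> \<beta> j k) = of_int (h j k)"
    and "Re (PiWB S g \<alpha> \<beta> j k) = 0" and "Re (PiBW S g \<alpha> \<beta> j k) = 0"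
proof -
  have e: "PiBB S g \<alpha> \<beta> j k = cnj (of_int (h j k) - PiBB S g \<alpha> \<beta> j k)"
    "PiWB S g \<alpha> \<beta> j k = cnj (0 - PiWB S g \<alpha> \<beta> j k)"
    "PiWW S g \<alpha> \<beta> j k = cnj (of_int (h j k) - PiWW S g \<alpha> \<beta> j k)"
    "PiBW S g \<alpha> \<beta> j k = cnj (0 - PiBW S g \<alpha> \<beta> j k)"
    using beta_period_reflect_type1[OF T omegaB(1)[OF basis], of j k]
      beta_period_reflect_type1[OF T omegaW(1)[OF basis], of j k]
      reflect_omegaB_type1[OF T, of k] reflect_omegaW_type1[OF T, of k]
      omegaB(2)[OF basis, of k] omegaW(2)[OF basis, of k] jk h_sym
    by (simp_all add: PiBB_def PiWB_def PiWW_def PiBW_def sum_of_int_delta)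
  show "2 * Re (PiBB S g \<alpha> \<beta> j k) = of_int (h j k)" "2 * Re (PiWW S g \<alpha> \<beta> j k) = of_int (h j k)"
    "Re (PiWB S g \<alpha> \<beta> j k) = 0" "Re (PiBW S g \<alpha> \<beta> j k) = 0"
    using Re_eq_if_eq_cnj_diff[OF e(1)] Re_eq_if_eq_cnj_diff[OF e(3)]
      Re_eq_if_eq_cnj_diff[OF e(2)] Re_eq_if_eq_cnj_diff[OF e(4)] by simp_all
qed

lemma period_matrix_type2:
  assumes T: "is_type2 S \<tau>" and jk: "j < g" "k < g"
  shows "PiBB S g \<alpha> \<beta> j k + cnj (PiWW S g \<alpha> \<beta> j k) = of_int (h j k)"
    and "PiWB S g \<alpha> \<beta> j k + cnj (PiBW S g \<alpha> \<beta> j k) = 0"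
  using beta_period_reflect_type2[OF T omegaB(1)[OF basis], of j k]
    reflect_omegaB_type2[OF T, of k] omegaB(2)[OF basis, of k] jk h_sym
  by (simp_all add: PiBB_def PiWB_def PiWW_def PiBW_def sum_of_int_delta)

end

theorem mainTheorem6:
  fixes S :: "('v, 'f) drs" and \<tau> :: "'v \<Rightarrow> 'v" and g :: nat
    and \<alpha> \<beta> :: "nat \<Rightarrow> 'v set list" and h :: "nat \<Rightarrow> nat \<Rightarrow> int"
  assumes "discrete_riemann_surface S g"
    and "discrete_antihol_involution S \<tau>"
    and "symplectic_basis S g \<alpha> \<beta>"
    and "\<forall>i<g. \<forall>j<g. h i j \<in> {0, 1} \<and> h i j = h j i"
    and "\<forall>i<g. homologous S (pchain (tau_path \<tau> (\<alpha> i))) (pchain (\<alpha> i))"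
    and "\<forall>i<g. homologous S (pchain (tau_path \<tau> (\<beta> i)))
                 (\<lambda>e. (\<Sum>j<g. h j i * pchain (\<alpha> j) e) - pchain (\<beta> i) e)"
  shows "(is_type1 S \<tau> \<longrightarrow> (\<forall>j<g. \<forall>k<g.
            2 * Re (PiBB S g \<alpha> \<beta> j k) = of_int (h j k) \<and>
            2 * Re (PiWW S g \<alpha> \<beta> j k) = of_int (h j k) \<and>
            Re (PiWB S g \<alpha> \<beta> j k) = 0 \<and> Re (PiBW S g \<alpha> \<beta> j k) = 0)) \<and>
         (is_type2 S \<tau> \<longrightarrow> (\<forall>j<g. \<forall>k<g.
            PiBB S g \<alpha> \<beta> j k + cnj (PiWW S g \<alpha> \<beta> j k) = of_int (h j k) \<and>
            PiWB S g \<alpha> \<beta> j k + cnj (PiBW S g \<alpha> \<beta> j k) = 0))"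
proof -
  interpret real_symplectic_basis S g \<tau> \<alpha> \<beta> h
    using assms by unfold_locales (simp_all add: discrete_antihol_involution_def)
  show ?thesis using period_matrix_type1 period_matrix_type2 by blast
qed

end
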